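(* The shard intersection order $(S_n,\le)$ (for $n\ge 1$) admits a symmetric boolean decomposition $\{P_1,\dots,P_k\}$ with the additional property that each $P_i$ is either contained in or disjoint from the set $S_n(231)$ of $231$-avoiding permutations, and the parts $P_i$ contained in $S_n(231)$ form a symmetric boolean decomposition of the induced subposet $(S_n(231),\le)$ (which is isomorphic to the lattice $NC(n)$ of noncrossing partitions ordered by refinement).
   Context: For $w=w(1)\cdots w(n)\in S_n$ (one-line notation), a descent is an index $i$ with $w(i)>w(i+1)$, and $d(w)$ is the number of descents. The blocks of $w$ are the sets of letters of its maximal decreasing runs (maximal consecutive factors $w(a)>w(a+1)>\cdots>w(b)$); they partition $\{1,\dots,n\}$. Let $V=\{x\in\mathbb R^n:\sum_i x_i=0\}$. The cone $C(w)\subseteq V$ is the set of $x\in V$ such that: (i) $x_i=x_j$ whenever $i,j$ lie in the same block of $w$; (ii) whenever $i<k<j$ with $i,j$ in the same block and $k$ not in that block, $x_k\le x_i$ if $k$ appears to the left of $i$ in $w$, and $x_i\le x_k$ if $k$ appears to the right of $i$ in $w$. The shard intersection order on $S_n$ is defined by $u\le v$ iff $C(v)\subseteq C(u)$; it is a graded poset of rank $n-1$ with $\mathrm{rk}(w)=d(w)$. A permutation $w$ is $231$-avoiding if there are no $i<j<k$ with $w(k)<w(i)<w(j)$. Symmetric boolean decomposition: let $P$ be a graded poset of rank $N$ and $\mathrm B_m$ the boolean lattice of subsets of an $m$-element set. A partition $\{P_1,\dots,P_k\}$ of $P$ is a symmetric boolean decomposition if for each $i$ there is an integer $j$ with $0\le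 j\le N/2$ and a bijection $\rho_i:\mathrm B_{N-2j}\to P_i$ that sends cover relations of $\mathrm B_{N-2j}$ to cover relations of $P$ and sends elements of rank $r$ to elements of rank $j+r$ in $P$. *)

theory Defs
  imports "HOL-Combinatorics.Permutations" Complex_Main
begin

text \<open>Permutations of {1..n} in one-line notation: w i is the letter at position i.\<close>

definition Sn :: "nat \<Rightarrow> (nat \<Rightarrow> nat) set" where
  "Sn n = {w. w permutes {1..n}}"

definition descents :: "nat \<Rightarrow> (nat \<Rightarrow> nat) \<Rightarrow> nat set" where
  "descents n w = {i. 1 \<le> i \<and> i < n \<and> w (i + 1) < w i}"

definition des :: "nat \<Rightarrow> (nat \<Rightarrow> nat) \<Rightarrow> nat" where
  "des n w = card (descents n w)"

text \<open>Letters a and b lie in the same block (maximal decreasing run) of w: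
  every position strictly between their positions (and starting at the smaller one) is a descent.\<close>
definition same_block :: "nat \<Rightarrow> (nat \<Rightarrow> nat) \<Rightarrow> nat \<Rightarrow> nat \<Rightarrow> bool" where
  "same_block n w a b \<longleftrightarrow> a \<in> {1..n} \<and> b \<in> {1..n} \<and>
     (\<forall>t. min (inv w a) (inv w b) \<le> t \<and> t < max (inv w a) (inv w b) \<longrightarrow> t \<in> descents n w)"

text \<open>The cone C(w) inside V = {x in R^n. sum x = 0}; vectors are functions on {1..n}, zero elsewhere.\<close>
definition cone :: "nat \<Rightarrow> (nat \<Rightarrow> nat) \<Rightarrow> (nat \<Rightarrow> real) set" where
  "cone n w = {x. (\<forall>i. i \<notin> {1..n} \<longrightarrow> x i = 0) \<and> (\<Sum>i\<in>{1..n}. x i) = 0 \<and>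
     (\<forall>i j. same_block n w i j \<longrightarrow> x i = x j) \<and>
     (\<forall>i j k. i < k \<and> k < j \<and> same_block n w i j \<and> \<not> same_block n w i k \<and> k \<in> {1..n} \<longrightarrow>
        (inv w k < inv w i \<longrightarrow> x k \<le> x i) \<and> (inv w i < inv w k \<longrightarrow> x i \<le> x k))}"

definition shard_le :: "nat \<Rightarrow> (nat \<Rightarrow> nat) \<Rightarrow> (nat \<Rightarrow> nat) \<Rightarrow> bool" where
  "shard_le n u v \<longleftrightarrow> cone n v \<subseteq> cone n u"

definition avoids231 :: "nat \<Rightarrow> (nat \<Rightarrow> nat) \<Rightarrow> bool" where
  "avoids231 n w \<longleftrightarrow> \<not> (\<exists>i j k. 1 \<le> i \<and> i < j \<and> j < k \<and> k \<le> n \<and> w k < w i \<and> w i < w j)"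

definition Sn231 :: "nat \<Rightarrow> (nat \<Rightarrow> nat) set" where
  "Sn231 n = {w \<in> Sn n. avoids231 n w}"

definition covers :: "'a set \<Rightarrow> ('a \<Rightarrow> 'a \<Rightarrow> bool) \<Rightarrow> 'a \<Rightarrow> 'a \<Rightarrow> bool" where
  "covers P le u v \<longleftrightarrow> u \<in> P \<and> v \<in> P \<and> le u v \<and> u \<noteq> v \<and>
     \<not> (\<exists>z\<in>P. le u z \<and> le z v \<and> z \<noteq> u \<and> z \<noteq> v)"

text \<open>Symmetric boolean decomposition of a graded poset (P, le) of rank N with rank function rk.
  The boolean lattice B_m is Pow {..<m}; its covers are S \<subseteq> T with |T| = |S| + 1.\<close>
definition sym_bool_decomp ::
  "'a set \<Rightarrow> ('a \<Rightarrow> 'a \<Rightarrow> bool) \<Rightarrow> ('a \<Rightarrow> nat) \<Rightarrow> nat \<Rightarrow> 'a set set \<Rightarrow> bool" where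
  "sym_bool_decomp P le rk N Q \<longleftrightarrow>
     \<Union>Q = P \<and> {} \<notin> Q \<and> (\<forall>A\<in>Q. \<forall>B\<in>Q. A \<noteq> B \<longrightarrow> A \<inter> B = {}) \<and>
     (\<forall>A\<in>Q. \<exists>j (\<rho> :: nat set \<Rightarrow> 'a). 2 * j \<le> N \<and>
        bij_betw \<rho> (Pow {..<N - 2 * j}) A \<and>
        (\<forall>S T. S \<subseteq> T \<and> T \<subseteq> {..<N - 2 * j} \<and> card T = card S + 1 \<longrightarrow> covers P le (\<rho> S) (\<rho> T)) \<and>
        (\<forall>S. S \<subseteq> {..<N - 2 * j} \<longrightarrow> rk (\<rho> S) = j + card S))"

end

theory Submission
  imports Defs
begin

(*
  Proof idea: valley hopping on decreasing binary trees.

  The one-line word of w is the in-order reading of a unique decreasing binary tree (each node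
  exceeds its descendants).  Nodes with exactly one child are unary.  Moving the single child of
  a unary node y from the left to the right lets the letter y hop leftwards over a factor of
  smaller letters; such a hop is a cover relation of the shard intersection order adding one
  descent.  Putting all single children on the left gives a normal tree k with b binary and d
  unary nodes, n = 2b + d + 1.  Flipping the subsets S of its unary nodes yields a class of 2^d
  permutations indexed by the boolean lattice on d = (n - 1) - 2b points, with b + |S| descents.
  The classes partition S_n, and each class consists entirely of 231-avoiders or of none.
*)

section \<open>Blocks and cones\<close>

lemma perm_in: "w permutes {1..n} \<Longrightarrow> p \<in> {1..n} \<Longrightarrow> w p \<in> {1..n}"
  using permutes_in_image[of w "{1..n}" p] by simp

lemma perm_inv_in: "w permutes {1..n} \<Longrightarrow> p \<in> {1..n} \<Longrightarrow> inv w p \<in> {1..n}"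
  using permutes_in_image[of w "{1..n}" "inv w p"] permutes_inverses(1)[of w "{1..n}" p] by simp

lemma perm_inv_app: "w permutes S \<Longrightarrow> inv w (w p) = p"
  using permutes_inverses(2) by metis

lemma perm_app_inv: "w permutes S \<Longrightarrow> w (inv w p) = p"
  using permutes_inverses(1) by metis

definition desc_on :: "(nat \<Rightarrow> nat) \<Rightarrow> nat \<Rightarrow> nat \<Rightarrow> bool" where
  "desc_on w lo hi \<longleftrightarrow> (\<forall>t. lo \<le> t \<and> t < hi \<longrightarrow> w (t + 1) < w t)"

definition same_run :: "(nat \<Rightarrow> nat) \<Rightarrow> nat \<Rightarrow> nat \<Rightarrow> bool" where
  "same_run w p q \<longleftrightarrow> desc_on w (min p q) (max p q)"

lemma same_run_iff: "same_run w p q \<longleftrightarrow> (\<forall>t. min p q \<le> t \<and> t < max p q \<longrightarrow> w (t + 1) < w t)"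
  by (simp add: same_run_def desc_on_def)

lemma same_run_sym: "same_run w p q = same_run w q p"
  unfolding same_run_iff by (simp add: min.commute max.commute)

lemma same_run_trans: "same_run w p q \<Longrightarrow> same_run w q r \<Longrightarrow> same_run w p r"
  unfolding same_run_iff
proof (intro allI impI)
  fix t
  assume "\<forall>t. min p q \<le> t \<and> t < max p q \<longrightarrow> w (t + 1) < w t"
    and "\<forall>t. min q r \<le> t \<and> t < max q r \<longrightarrow> w (t + 1) < w t"
    and t: "min p r \<le> t \<and> t < max p r"
  moreover have "(min p q \<le> t \<and> t < max p q) \<or> (min q r \<le> t \<and> t < max q r)"
    using t by (cases "p \<le> q"; cases "q \<le> r"; cases "p \<le> r"; simp add: min_def max_def; linarith)
  ultimately show "w (t + 1) < w t" by blast
qed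

lemma same_run_shrink: "same_run w s1 s2 \<Longrightarrow> s1 \<le> r \<Longrightarrow> r \<le> s2 \<Longrightarrow> same_run w r s2"
  unfolding same_run_iff by (auto simp: min_def max_def)

lemma same_run_decreasing: "same_run w p q \<Longrightarrow> p < q \<Longrightarrow> w q < w p"
proof (induction q)
  case 0
  then show ?case by simp
next
  case (Suc q)
  have step: "w (q + 1) < w q"
    using Suc.prems unfolding same_run_iff by (auto simp: min_def max_def)
  show ?case
  proof (cases "p = q")
    case True
    then show ?thesis using step by simp
  next
    case False
    then have "p < q" "same_run w p q"
      using Suc.prems unfolding same_run_iff by (auto simp: min_def max_def)
    then show ?thesis using Suc.IH step by simp
  qed
qed

lemma same_block_pos:
  assumes "w permutes {1..n}" "p \<in> {1..n}" "q \<in> {1..n}"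
  shows "same_block n w (w p) (w q) \<longleftrightarrow> same_run w p q"
proof -
  have i: "inv w (w p) = p" "inv w (w q) = q" using perm_inv_app[OF assms(1)] by auto
  have "w p \<in> {1..n}" "w q \<in> {1..n}" using perm_in[OF assms(1)] assms by auto
  then show ?thesis using assms(2,3) unfolding same_block_def i same_run_iff descents_def
    by (auto simp: min_def max_def)
qed

lemma same_block_iff_run:
  assumes w: "w permutes {1..n}"
  shows "same_block n w a b \<longleftrightarrow> a \<in> {1..n} \<and> b \<in> {1..n} \<and> same_run w (inv w a) (inv w b)"
proof (cases "a \<in> {1..n} \<and> b \<in> {1..n}")
  case True
  then show ?thesis
    using same_block_pos[OF w, of "inv w a" "inv w b"] perm_inv_in[OF w] perm_app_inv[OF w] by auto
qed (auto simp: same_block_def)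

lemma same_block_in: "same_block n w a b \<Longrightarrow> a \<in> {1..n} \<and> b \<in> {1..n}"
  by (simp add: same_block_def)

lemma same_block_refl: "c \<in> {1..n} \<Longrightarrow> same_block n w c c"
  unfolding same_block_def by auto

lemma same_block_sym: "same_block n w a b = same_block n w b a"
  unfolding same_block_def by (auto simp: min.commute max.commute)

lemma same_block_trans:
  assumes "w permutes {1..n}" "same_block n w a b" "same_block n w b c"
  shows "same_block n w a c"
  using assms same_run_trans unfolding same_block_iff_run[OF assms(1)] by blast

lemma same_block_adjacent:
  assumes u: "u permutes {1..n}" and t: "1 \<le> t" "t < n" and d: "u (t + 1) < u t"
  shows "same_block n u (u t) (u (t + 1))"
proof -
  have "same_run u t (t + 1)"
    unfolding same_run_iff
  proof (intro allI impI)
    fix s assume "min t (t + 1) \<le> s \<and> s < max t (t + 1)"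
    then have "s = t" by simp
    then show "u (s + 1) < u s" using d by simp
  qed
  then show ?thesis using same_block_pos[OF u, of t "t + 1"] t by simp
qed

lemma same_block_order:
  assumes w: "w permutes {1..n}" and blk: "same_block n w i j" and ij: "i < j"
  shows "inv w j < inv w i"
proof (rule ccontr)
  have run: "same_run w (inv w i) (inv w j)" using same_block_iff_run[OF w] blk by blast
  assume "\<not> inv w j < inv w i"
  moreover have "inv w i \<noteq> inv w j" using ij perm_app_inv[OF w, of i] perm_app_inv[OF w, of j] by auto
  ultimately have "inv w i < inv w j" by linarith
  then have "j < i" using same_run_decreasing[OF run] perm_app_inv[OF w] by metis
  then show False using ij by simp
qed

text \<open>The number of ascents strictly before position p; it is constant exactly on runs.\<close>
definition asc_before :: "(nat \<Rightarrow> nat) \<Rightarrow> nat \<Rightarrow> nat" where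
  "asc_before w p = card {s. 1 \<le> s \<and> s < p \<and> w s < w (s + 1)}"

lemma asc_before_mono: "p \<le> q \<Longrightarrow> asc_before w p \<le> asc_before w q"
  unfolding asc_before_def by (rule card_mono) auto

lemma asc_before_eq:
  assumes "p \<le> q" "same_run w p q"
  shows "asc_before w p = asc_before w q"
proof -
  have desc: "w (t + 1) < w t" if "p \<le> t" "t < q" for t
    using assms that unfolding same_run_iff by (simp add: min_def max_def)
  have "s < p" if "s < q" "w s < w (s + 1)" for s
    by (rule ccontr) (use desc[of s] that in auto)
  then have "{s. 1 \<le> s \<and> s < p \<and> w s < w (s + 1)} = {s. 1 \<le> s \<and> s < q \<and> w s < w (s + 1)}"
    using assms(1) by auto
  then show ?thesis unfolding asc_before_def by simp
qed

lemma asc_before_less: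
  assumes "p < q" "\<not> same_run w p q" "inj w" "1 \<le> p"
  shows "asc_before w p < asc_before w q"
proof -
  obtain t where t: "p \<le> t" "t < q" "\<not> w (t + 1) < w t"
    using assms(1,2) unfolding same_run_iff by (auto simp: min_def max_def)
  have "w t \<noteq> w (t + 1)" using assms(3) by (simp add: inj_eq)
  then have "t \<in> {s. 1 \<le> s \<and> s < q \<and> w s < w (s + 1)} - {s. 1 \<le> s \<and> s < p \<and> w s < w (s + 1)}"
    using t assms(4) by auto
  then have "{s. 1 \<le> s \<and> s < p \<and> w s < w (s + 1)} \<subset> {s. 1 \<le> s \<and> s < q \<and> w s < w (s + 1)}"
    using assms(1) by auto
  moreover have "finite {s. 1 \<le> s \<and> s < q \<and> w s < w (s + 1)}"
    by (rule finite_subset[of _ "{..<q}"]) auto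
  ultimately show ?thesis unfolding asc_before_def by (rule psubset_card_mono[rotated])
qed

lemma asc_before_eq_iff:
  assumes "inj w" "1 \<le> p" "1 \<le> q"
  shows "asc_before w p = asc_before w q \<longleftrightarrow> same_run w p q"
proof
  assume h: "asc_before w p = asc_before w q"
  show "same_run w p q"
  proof (rule ccontr)
    assume n: "\<not> same_run w p q"
    then have "p \<noteq> q" by (auto simp: same_run_iff)
    then consider "p < q" | "q < p" by linarith
    then show False
    proof cases
      case 1
      then show False using asc_before_less[OF 1 n assms(1,2)] h by simp
    next
      case 2
      have "\<not> same_run w q p" using n same_run_sym[of w p q] by blast
      then show False using asc_before_less[OF 2 _ assms(1,3)] h by simp
    qed
  qed
next
  assume h: "same_run w p q"
  then have h': "same_run w q p" using same_run_sym[of w p q] by blast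
  show "asc_before w p = asc_before w q"
  proof (cases "p \<le> q")
    case True
    then show ?thesis using asc_before_eq[OF True h] by simp
  next
    case False
    then show ?thesis using asc_before_eq[OF _ h'] by simp
  qed
qed

text \<open>Coordinate i records the run index of the letter i, centred so that the coordinates sum
  to zero.  It lies in C(w) and distinguishes different blocks.\<close>
definition run_vector :: "nat \<Rightarrow> (nat \<Rightarrow> nat) \<Rightarrow> nat \<Rightarrow> real" where
  "run_vector n w i = (if i \<in> {1..n}
     then real (asc_before w (inv w i)) - (\<Sum>j\<in>{1..n}. real (asc_before w (inv w j))) / real n
     else 0)"

lemma cone_block_eq: "x \<in> cone n w \<Longrightarrow> same_block n w i j \<Longrightarrow> x i = x j"
  by (auto simp: cone_def)

lemma cone_left_le:
  "x \<in> cone n w \<Longrightarrow> i < k \<Longrightarrow> k < j \<Longrightarrow> same_block n w i j \<Longrightarrow> \<not> same_block n w i k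
   \<Longrightarrow> k \<in> {1..n} \<Longrightarrow> inv w k < inv w i \<Longrightarrow> x k \<le> x i"
  unfolding cone_def by blast

lemma cone_right_le:
  "x \<in> cone n w \<Longrightarrow> i < k \<Longrightarrow> k < j \<Longrightarrow> same_block n w i j \<Longrightarrow> \<not> same_block n w i k
   \<Longrightarrow> k \<in> {1..n} \<Longrightarrow> inv w i < inv w k \<Longrightarrow> x i \<le> x k"
  unfolding cone_def by blast

lemma run_vector_in_cone:
  assumes w: "w permutes {1..n}"
  shows "run_vector n w \<in> cone n w"
proof -
  have sum0: "(\<Sum>i\<in>{1..n}. run_vector n w i) = 0"
  proof (cases "n = 0")
    case False
    have "(\<Sum>i\<in>{1..n}. run_vector n w i)
        = (\<Sum>i\<in>{1..n}. real (asc_before w (inv w i)))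
          - real n * ((\<Sum>j\<in>{1..n}. real (asc_before w (inv w j))) / real n)"
      by (simp add: run_vector_def sum_subtractf)
    then show ?thesis using False by simp
  qed simp
  have blocks: "run_vector n w i = run_vector n w j" if "same_block n w i j" for i j
    using that asc_before_eq_iff[OF permutes_inj[OF w], of "inv w i" "inv w j"] perm_inv_in[OF w]
    unfolding same_block_iff_run[OF w] by (auto simp: run_vector_def)
  have mono: "run_vector n w i \<le> run_vector n w k"
    if "i \<in> {1..n}" "k \<in> {1..n}" "inv w i < inv w k" for i k
    using that asc_before_mono[of "inv w i" "inv w k" w] by (simp add: run_vector_def)
  show ?thesis
    unfolding cone_def using sum0 blocks mono same_block_in
    by (auto simp: run_vector_def)
qed

lemma cone_refines_blocks:
  assumes w: "w permutes {1..n}" and c: "cone n w \<subseteq> cone n u" and h: "same_block n u a b"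
  shows "same_block n w a b"
proof -
  have ab: "a \<in> {1..n}" "b \<in> {1..n}" using same_block_in[OF h] by auto
  have "run_vector n w a = run_vector n w b"
    using cone_block_eq[OF _ h] run_vector_in_cone[OF w] c by auto
  then have "asc_before w (inv w a) = asc_before w (inv w b)" using ab by (simp add: run_vector_def)
  then have "same_run w (inv w a) (inv w b)"
    using asc_before_eq_iff[OF permutes_inj[OF w]] perm_inv_in[OF w] ab by auto
  then show ?thesis using same_block_iff_run[OF w] ab by auto
qed

lemma cone_descent_bounds:
  assumes u: "u permutes {1..n}" and x: "x \<in> cone n u" and s: "1 \<le> s" "s < n"
    and between: "u (s + 1) < c" "c < u s" and c: "c \<in> {1..n}"
  shows "inv u c \<le> s \<Longrightarrow> x c \<le> x (u (s + 1))"
    and "s < inv u c \<Longrightarrow> x (u (s + 1)) \<le> x c"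
proof -
  have blk: "same_block n u (u (s + 1)) (u s)"
    using same_block_adjacent[OF u s] between same_block_sym by force
  have pos: "inv u (u (s + 1)) = s + 1" "inv u (u s) = s" using perm_inv_app[OF u] by auto
  have ne: "inv u c \<noteq> s" "inv u c \<noteq> s + 1" using between perm_app_inv[OF u, of c] by auto
  show "x c \<le> x (u (s + 1))" if "inv u c \<le> s"
  proof (cases "same_block n u (u (s + 1)) c")
    case False
    then show ?thesis
      by (rule cone_left_le[OF x between(1,2) blk _ c]) (use that pos in simp)
  qed (simp add: cone_block_eq[OF x])
  show "x (u (s + 1)) \<le> x c" if "s < inv u c"
  proof (cases "same_block n u (u (s + 1)) c")
    case False
    then show ?thesis
      by (rule cone_right_le[OF x between(1,2) blk _ c]) (use that pos ne in simp)
  qed (simp add: cone_block_eq[OF x])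
qed

text \<open>Vectors of C(u) weakly increase along every inversion of u: if p < q and u q < u p then
  x (u p) \<le> x (u q).  Induction on q - p, reducing to an inversion across a single descent.\<close>
lemma cone_inversion_le:
  assumes u: "u permutes {1..n}" and x: "x \<in> cone n u"
  shows "1 \<le> p \<Longrightarrow> p < q \<Longrightarrow> q \<le> n \<Longrightarrow> u q < u p \<Longrightarrow> x (u p) \<le> x (u q)"
proof (induction "q - p" arbitrary: p q rule: less_induct)
  case less
  show ?case
  proof (cases "\<exists>r. p < r \<and> r < q \<and> u q < u r \<and> u r < u p")
    case True
    then obtain r where r: "p < r" "r < q" "u q < u r" "u r < u p" by blast
    have "x (u p) \<le> x (u r)" using less.hyps[of r p] less.prems r by simp
    also have "\<dots> \<le> x (u q)" using less.hyps[of q r] less.prems r by simp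
    finally show ?thesis .
  next
    case no_mid: False
    define R where "R = {t \<in> {p..q}. u p \<le> u t}"
    define r where "r = Max R"
    have fin: "finite R" and "p \<in> R" "q \<notin> R" unfolding R_def using less.prems by auto
    then have "r \<in> R" unfolding r_def using Max_in by blast
    moreover from this have "r \<noteq> q" using \<open>q \<notin> R\<close> by blast
    ultimately have r: "p \<le> r" "r < q" "u p \<le> u r" unfolding R_def by auto
    have after: "r + 1 \<notin> R" using Max_ge[OF fin, of "r + 1"] unfolding r_def by auto
    have drop: "u (r + 1) < u p" using after r unfolding R_def by auto
    have inj: "inj u" using permutes_inj[OF u] .
    have range: "1 \<le> r" "r < n" using r less.prems by auto
    have up_in: "u p \<in> {1..n}" "u q \<in> {1..n}" using perm_in[OF u] less.prems by auto
    have "x (u p) \<le> x (u (r + 1))"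
    proof (cases "r = p")
      case True
      then show ?thesis
        using cone_block_eq[OF x same_block_adjacent[OF u range]] drop by simp
    next
      case False
      then have "u p < u r" using r inj by (simp add: inj_eq le_less)
      then show ?thesis
        using cone_descent_bounds(1)[OF u x range drop] up_in r perm_inv_app[OF u] by simp
    qed
    also have "\<dots> \<le> x (u q)"
    proof (cases "r + 1 = q")
      case False
      then have "p < r + 1" "r + 1 < q" using r by auto
      then have "u (r + 1) \<le> u q" using no_mid drop by (metis not_le)
      then have "u (r + 1) < u q" using False inj by (simp add: inj_eq le_less)
      moreover have "u q < u r" using less.prems r by simp
      ultimately show ?thesis
        using cone_descent_bounds(2)[OF u x range] up_in r perm_inv_app[OF u] by simp
    qed simp
    finally show ?thesis .
  qed
qed

lemma strict_mono_self_map_id: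
  fixes f :: "nat \<Rightarrow> nat"
  assumes m: "\<And>t. 1 \<le> t \<Longrightarrow> t < n \<Longrightarrow> f t < f (t + 1)"
    and r: "\<And>t. t \<in> {1..n} \<Longrightarrow> f t \<in> {1..n}" and t: "t \<in> {1..n}"
  shows "f t = t"
proof -
  have ge: "1 \<le> s \<longrightarrow> s \<le> n \<longrightarrow> s \<le> f s" for s
  proof (induction s)
    case (Suc s)
    then show ?case using r[of 1] m[of s] by (cases "s = 0") auto
  qed simp
  have le: "k < n \<longrightarrow> f (n - k) \<le> n - k" for k
  proof (induction k)
    case (Suc k)
    show ?case
    proof
      assume k: "Suc k < n"
      then have "n - k = (n - Suc k) + 1" by simp
      moreover have "f (n - Suc k) < f (n - Suc k + 1)" using m[of "n - Suc k"] k by simp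
      ultimately show "f (n - Suc k) \<le> n - Suc k" using Suc.IH k by simp
    qed
  qed (use r[of n] in auto)
  show ?thesis using le[of "n - t"] ge[of t] t by simp
qed

text \<open>The inverse of u read along z is increasing: along a
  descent of z this is the block condition, along an ascent it follows from the inversion
  inequality applied to the test vector of z.\<close>
lemma cone_determines_perm:
  assumes u: "u permutes {1..n}" and z: "z permutes {1..n}"
    and sb: "\<And>a b. same_block n z a b \<Longrightarrow> same_block n u a b" and c: "cone n z \<subseteq> cone n u"
  shows "u = z"
proof -
  have ui: "\<And>t. u (inv u t) = t" using perm_app_inv[OF u] .
  have increasing: "inv u (z t) < inv u (z (t + 1))" if t: "1 \<le> t" "t < n" for t
  proof (rule ccontr)
    have "z t \<noteq> z (t + 1)" using permutes_inj[OF z] by (simp add: inj_eq)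
    then have ne: "inv u (z t) \<noteq> inv u (z (t + 1))" using permutes_inj[OF permutes_inv[OF u]]
      by (simp add: inj_eq)
    assume "\<not> ?thesis"
    with ne have lt: "inv u (z (t + 1)) < inv u (z t)" by simp
    have zin: "z t \<in> {1..n}" "z (t + 1) \<in> {1..n}" using perm_in[OF z] t by auto
    show False
    proof (cases "z (t + 1) < z t")
      case True
      then have "same_block n u (z t) (z (t + 1))" using sb same_block_adjacent[OF z t] by blast
      then have "same_run u (inv u (z (t + 1))) (inv u (z t))"
        using same_block_iff_run[OF u] same_run_sym by metis
      then have "u (inv u (z t)) < u (inv u (z (t + 1)))" using same_run_decreasing lt by blast
      then show False using True ui by simp
    next
      case False
      then have zlt: "z t < z (t + 1)" using \<open>z t \<noteq> z (t + 1)\<close> by simp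
      have "run_vector n z \<in> cone n u" using run_vector_in_cone[OF z] c by blast
      moreover have "inv u (z t) \<in> {1..n}" "inv u (z (t + 1)) \<in> {1..n}"
        using perm_inv_in[OF u] zin by auto
      ultimately have "run_vector n z (u (inv u (z (t + 1)))) \<le> run_vector n z (u (inv u (z t)))"
        by (intro cone_inversion_le[OF u]) (use lt ui zlt in auto)
      then have "run_vector n z (z (t + 1)) \<le> run_vector n z (z t)" using ui by simp
      moreover have "\<not> same_run z t (t + 1)" using zlt unfolding same_run_iff by auto
      then have "asc_before z t < asc_before z (t + 1)"
        using asc_before_less[of t "t + 1" z] permutes_inj[OF z] t by simp
      ultimately show False using zin perm_inv_app[OF z] by (simp add: run_vector_def)
    qed
  qed
  have "inv u (z t) = t" if "t \<in> {1..n}" for t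
    by (rule strict_mono_self_map_id[of n "\<lambda>t. inv u (z t)"])
      (use increasing perm_inv_in[OF u] perm_in[OF z] that in auto)
  then show ?thesis
    using ui permutes_not_in[OF u] permutes_not_in[OF z] by (metis ext)
qed

section \<open>A hop is a cover relation\<close>

text \<open>The letter y = u p hops leftwards to position a over the factor u a, ..., u (p - 1) of
  letters smaller than y; the letters just outside the factor (at positions a - 1 and p + 1)
  exceed y.  In u the letter y forms a block of its own, in v it joins the block of u a.\<close>
locale left_hop =
  fixes n :: nat and u v :: "nat \<Rightarrow> nat" and a p :: nat
  assumes u: "u permutes {1..n}" and v: "v permutes {1..n}"
    and ap: "1 \<le> a" "a < p" "p \<le> n"
    and va: "v a = u p" and vmid: "\<And>t. a < t \<Longrightarrow> t \<le> p \<Longrightarrow> v t = u (t - 1)"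
    and vout: "\<And>t. t < a \<or> p < t \<Longrightarrow> v t = u t"
    and smaller: "\<And>t. a \<le> t \<Longrightarrow> t < p \<Longrightarrow> u t < u p"
    and left: "1 < a \<Longrightarrow> u p < u (a - 1)" and right: "p < n \<Longrightarrow> u p < u (p + 1)"
begin

text \<open>The new position in v of the letter at position s \<noteq> p of u.\<close>
definition shift :: "nat \<Rightarrow> nat" where
  "shift s = (if a \<le> s \<and> s < p then s + 1 else s)"

lemma v_shift: "s \<noteq> p \<Longrightarrow> v (shift s) = u s"
  unfolding shift_def using vmid[of "s + 1"] vout[of s] by auto

lemma shift_in: "s \<in> {1..n} \<Longrightarrow> shift s \<in> {1..n}"
  unfolding shift_def using ap by auto

lemma inv_v_shift: "s \<noteq> p \<Longrightarrow> inv v (u s) = shift s"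
  using v_shift[of s] perm_inv_app[OF v, of "shift s"] by metis

lemma shift_strict: "s1 < s2 \<Longrightarrow> s1 \<noteq> p \<Longrightarrow> s2 \<noteq> p \<Longrightarrow> shift s1 < shift s2"
  unfolding shift_def by auto

lemma shift_mono: "s1 \<le> s2 \<Longrightarrow> shift s1 \<le> shift s2"
  unfolding shift_def using ap by auto

lemma shift_min_max: "min (shift s1) (shift s2) = shift (min s1 s2)" "max (shift s1) (shift s2) = shift (max s1 s2)"
  using shift_mono[of s1 s2] shift_mono[of s2 s1] by (cases "s1 \<le> s2"; simp add: min_def max_def)+

lemma no_run_across:
  assumes "s1 < p" "p < s2" "s2 \<le> n"
  shows "\<not> desc_on u s1 s2" "\<not> desc_on v (shift s1) (shift s2)"
proof -
  have up: "u p < u (p + 1)" using right assms by simp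
  show "\<not> desc_on u s1 s2"
  proof
    assume "desc_on u s1 s2"
    then have "u (p + 1) < u p" using assms unfolding desc_on_def by simp
    then show False using up by simp
  qed
  have "u (p - 1) < u p" using smaller[of "p - 1"] ap by simp
  then have vp: "v p < v (p + 1)" using vmid[of p] vout[of "p + 1"] ap up by simp
  show "\<not> desc_on v (shift s1) (shift s2)"
  proof
    assume "desc_on v (shift s1) (shift s2)"
    moreover have "shift s1 \<le> p" "p < shift s2" using assms unfolding shift_def by auto
    ultimately have "v (p + 1) < v p" unfolding desc_on_def by blast
    then show False using vp by simp
  qed
qed

lemma desc_on_shift_below:
  assumes s: "s1 \<le> s2" "1 \<le> s1" "s2 < p" and d: "desc_on u s1 s2"
  shows "desc_on v (shift s1) (shift s2)"
  unfolding desc_on_def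
proof (intro allI impI)
  fix t assume t: "shift s1 \<le> t \<and> t < shift s2"
  have sg1: "s1 \<le> shift s1" "shift s1 \<le> s1 + 1" unfolding shift_def by auto
  have sg2: "shift s2 = (if a \<le> s2 then s2 + 1 else s2)" unfolding shift_def using s by auto
  consider "t + 1 < a" | "t + 1 = a" | "t = a" | "a < t" by linarith
  then show "v (t + 1) < v t"
  proof cases
    case 1
    then have "s1 \<le> t" "t < s2" using t sg1 sg2 by (auto split: if_splits)
    then have "u (t + 1) < u t" using d unfolding desc_on_def by auto
    then show ?thesis using vout[of t] vout[of "t + 1"] 1 by simp
  next
    case 2
    then have "1 < a" "a - 1 = t" using t sg1 s by auto
    then show ?thesis using left va vout[of t] 2 by simp
  next
    case 3
    then show ?thesis using va vmid[of "a + 1"] ap smaller[of a] by simp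
  next
    case 4
    then have "a \<le> s2" using t sg2 by (auto split: if_splits)
    then have tl: "t - 1 < s2" using t sg2 4 by arith
    have "s1 \<le> t - 1" using t sg1 4 s unfolding shift_def by (auto split: if_splits)
    then have "u (t - 1 + 1) < u (t - 1)" using d tl unfolding desc_on_def by blast
    moreover have "t < p" using tl s by simp
    ultimately show ?thesis using vmid[of t] vmid[of "t + 1"] 4 by simp
  qed
qed

lemma desc_on_unshift_below:
  assumes s: "s1 \<le> s2" "1 \<le> s1" "s2 < p" and d: "desc_on v (shift s1) (shift s2)"
  shows "desc_on u s1 s2"
  unfolding desc_on_def
proof (intro allI impI)
  fix t assume t: "s1 \<le> t \<and> t < s2"
  consider "t + 1 < a" | "t + 1 = a" | "a \<le> t" by linarith
  then show "u (t + 1) < u t"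
  proof cases
    case 1
    have "shift s1 = s1" using t 1 unfolding shift_def by auto
    moreover have "s2 \<le> shift s2" unfolding shift_def by auto
    ultimately have "v (t + 1) < v t" using d t unfolding desc_on_def by auto
    then show ?thesis using vout[of t] vout[of "t + 1"] 1 by simp
  next
    case 2
    then have "1 < a" "a - 1 = t" using t s by auto
    then show ?thesis using left smaller[of a] ap 2 by simp
  next
    case 3
    have "shift s1 \<le> t + 1" unfolding shift_def using t by auto
    moreover have "shift s2 = s2 + 1" unfolding shift_def using t 3 s by auto
    ultimately have "v (t + 1 + 1) < v (t + 1)" using d t unfolding desc_on_def by auto
    moreover have "t + 1 < p" using t s by simp
    ultimately show ?thesis using vmid[of "t + 1"] vmid[of "t + 2"] 3 by simp
  qed
qed

lemma desc_on_shift_iff: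
  assumes s: "s1 \<le> s2" "1 \<le> s1" "s2 \<le> n" "s1 \<noteq> p" "s2 \<noteq> p"
  shows "desc_on v (shift s1) (shift s2) \<longleftrightarrow> desc_on u s1 s2"
proof -
  consider "p < s1" | "s1 < p" "p < s2" | "s2 < p" using s by linarith
  then show ?thesis
  proof cases
    case 1
    then have "shift s1 = s1" "shift s2 = s2" using s unfolding shift_def by auto
    then show ?thesis using 1 vout unfolding desc_on_def by auto
  next
    case 2
    then show ?thesis using no_run_across[OF 2 s(3)] by blast
  next
    case 3
    then show ?thesis using desc_on_shift_below[OF s(1,2) 3] desc_on_unshift_below[OF s(1,2) 3] by blast
  qed
qed

lemma blocks_away_from_moved:
  assumes c: "c \<in> {1..n}" "c \<noteq> u p" and d: "d \<in> {1..n}" "d \<noteq> u p"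
  shows "same_block n v c d \<longleftrightarrow> same_block n u c d"
proof -
  define s1 s2 where "s1 = inv u c" and "s2 = inv u d"
  have s: "s1 \<in> {1..n}" "s2 \<in> {1..n}" using perm_inv_in[OF u] c d s1_def s2_def by auto
  have us: "u s1 = c" "u s2 = d" using perm_app_inv[OF u] s1_def s2_def by auto
  have sp: "s1 \<noteq> p" "s2 \<noteq> p" using us c d by auto
  have m: "min s1 s2 \<le> max s1 s2" "1 \<le> min s1 s2" "max s1 s2 \<le> n" "min s1 s2 \<noteq> p" "max s1 s2 \<noteq> p"
    using s sp by (auto simp: min_def max_def)
  have "same_block n v c d \<longleftrightarrow> same_run v (shift s1) (shift s2)"
    using same_block_iff_run[OF v] c d inv_v_shift sp us by metis
  also have "\<dots> \<longleftrightarrow> desc_on v (shift (min s1 s2)) (shift (max s1 s2))"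
    by (simp add: same_run_def shift_min_max)
  also have "\<dots> \<longleftrightarrow> desc_on u (min s1 s2) (max s1 s2)" using desc_on_shift_iff[OF m] .
  also have "\<dots> \<longleftrightarrow> same_block n u c d"
    using same_block_iff_run[OF u] c d s1_def s2_def by (simp add: same_run_def)
  finally show ?thesis .
qed

lemma moved_in: "u p \<in> {1..n}"
  using perm_in[OF u] ap by simp

lemma target_letter: "u a \<in> {1..n}" "u a \<noteq> u p"
  using perm_in[OF u, of a] ap permutes_inj[OF u] by (auto simp: inj_eq)

lemma moved_singleton:
  assumes "same_block n u (u p) d"
  shows "d = u p"
proof (rule ccontr)
  assume ne: "d \<noteq> u p"
  define s where "s = inv u d"
  have s: "s \<in> {1..n}" "u s = d"
    using perm_inv_in[OF u] perm_app_inv[OF u] same_block_in[OF assms] s_def by auto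
  have run: "same_run u p s" using same_block_iff_run[OF u] assms perm_inv_app[OF u] s_def by metis
  have "s \<noteq> p" using s ne by auto
  show False
  proof (cases "s < p")
    case True
    then have "\<forall>t. s \<le> t \<and> t < p \<longrightarrow> u (t + 1) < u t"
      using run unfolding same_run_iff by (simp add: min_def max_def)
    moreover have "s \<le> p - 1 \<and> p - 1 < p" using True ap by simp
    ultimately have "u (p - 1 + 1) < u (p - 1)" by blast
    moreover have "a \<le> p - 1" using ap by simp
    ultimately show False using smaller[of "p - 1"] ap by simp
  next
    case False
    then have "u (p + 1) < u p" using run \<open>s \<noteq> p\<close> unfolding same_run_iff by (auto simp: min_def max_def)
    moreover have "p < n" using False \<open>s \<noteq> p\<close> s by simp
    ultimately show False using right by simp
  qed
qed

lemma moved_joins: "same_block n v (u p) (u a)"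
proof -
  have "v (a + 1) = u a" using vmid[of "a + 1"] ap by simp
  moreover have "u a < u p" using smaller[of a] ap by simp
  ultimately have "same_block n v (v a) (v (a + 1))" using same_block_adjacent[OF v, of a] ap va by simp
  then show ?thesis using va \<open>v (a + 1) = u a\<close> by simp
qed

lemma u_blocks_in_v:
  assumes "same_block n u c d"
  shows "same_block n v c d"
proof (cases "c = u p")
  case True
  then have "d = u p" using moved_singleton assms by simp
  then show ?thesis using True same_block_refl moved_in by simp
next
  case False
  then have "d \<noteq> u p" using moved_singleton assms same_block_sym by metis
  then show ?thesis using blocks_away_from_moved False assms same_block_in[OF assms] by simp
qed

lemma v_blocks_cases:
  assumes "same_block n v c d"
  shows "same_block n u c d \<or>
    ((c = u p \<or> same_block n u c (u a)) \<and> (d = u p \<or> same_block n u d (u a)))"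
proof -
  have cd: "c \<in> {1..n}" "d \<in> {1..n}" using same_block_in[OF assms] by auto
  have to_target: "same_block n u e (u a)" if "same_block n v e (u p)" "e \<noteq> u p" for e
    using same_block_trans[OF v that(1) moved_joins] blocks_away_from_moved that(2)
      same_block_in[OF that(1)] target_letter by simp
  consider "c = u p" "d = u p" | "c = u p" "d \<noteq> u p" | "c \<noteq> u p" "d = u p" | "c \<noteq> u p" "d \<noteq> u p"
    by blast
  then show ?thesis
  proof cases
    case 2
    then show ?thesis using to_target[of d] assms same_block_sym by metis
  next
    case 3
    then show ?thesis using to_target[of c] assms by metis
  next
    case 4
    then show ?thesis using blocks_away_from_moved cd assms by simp
  qed simp
qed

lemma cone_v_left:
  assumes X: "X \<in> cone n v" and ikj: "i < k" "k < j" and blk: "same_block n u i j"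
    and k: "k \<in> {1..n}" and left_of: "inv u k < inv u i"
  shows "X k \<le> X i"
proof -
  have i: "i \<in> {1..n}" "i \<noteq> u p" using same_block_in[OF blk] moved_singleton[of j] blk ikj by auto
  define si sk where "si = inv u i" and "sk = inv u k"
  have s: "si \<in> {1..n}" "sk \<in> {1..n}" "u si = i" "u sk = k"
    using perm_inv_in[OF u] perm_app_inv[OF u] i k si_def sk_def by auto
  have sip: "si \<noteq> p" using s i by auto
  show ?thesis
  proof (cases "k = u p")
    case True
    then have "p < si" using left_of perm_inv_app[OF u] si_def by simp
    then have "X (v a) \<le> X (v si)"
      using cone_inversion_le[OF v X, of a si] ap s vout[of si] va True ikj by auto
    then show ?thesis using va vout[of si] \<open>p < si\<close> s True by simp
  next
    case False
    then have skp: "sk \<noteq> p" using s by auto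
    have "shift sk < shift si" using shift_strict[OF _ skp sip] left_of si_def sk_def by simp
    moreover have "v (shift sk) = k" "v (shift si) = i" using v_shift skp sip s by auto
    ultimately have "X (v (shift sk)) \<le> X (v (shift si))"
      using cone_inversion_le[OF v X, of "shift sk" "shift si"] shift_in s ikj by auto
    then show ?thesis using \<open>v (shift sk) = k\<close> \<open>v (shift si) = i\<close> by simp
  qed
qed

lemma cone_v_right:
  assumes X: "X \<in> cone n v" and ikj: "i < k" "k < j" and blk: "same_block n u i j"
    and k: "k \<in> {1..n}" and right_of: "inv u i < inv u k"
  shows "X i \<le> X k"
proof -
  have ij: "i \<in> {1..n}" "j \<in> {1..n}" using same_block_in[OF blk] by auto
  have "i \<noteq> u p" "j \<noteq> u p"
    using moved_singleton[of j] moved_singleton[of i] blk same_block_sym[of n u i j] ikj by auto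
  define si sj sk where "si = inv u i" and "sj = inv u j" and "sk = inv u k"
  have s: "si \<in> {1..n}" "sj \<in> {1..n}" "sk \<in> {1..n}" "u si = i" "u sj = j" "u sk = k"
    using perm_inv_in[OF u] perm_app_inv[OF u] ij k si_def sj_def sk_def by auto
  have sp: "si \<noteq> p" "sj \<noteq> p" using s \<open>i \<noteq> u p\<close> \<open>j \<noteq> u p\<close> by auto
  have Xij: "X i = X j" using cone_block_eq[OF X u_blocks_in_v[OF blk]] .
  have run: "same_run u si sj" using same_block_iff_run[OF u] blk si_def sj_def by blast
  have "sj < si" using same_block_order[OF u blk] ikj si_def sj_def by simp
  show ?thesis
  proof (cases "k = u p")
    case False
    then have skp: "sk \<noteq> p" using s by auto
    have "shift sj < shift sk" using shift_strict skp sp \<open>sj < si\<close> right_of si_def sk_def by simp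
    moreover have "v (shift sk) = k" "v (shift sj) = j" using v_shift skp sp s by auto
    ultimately have "X (v (shift sj)) \<le> X (v (shift sk))"
      using cone_inversion_le[OF v X, of "shift sj" "shift sk"] shift_in s ikj by auto
    then show ?thesis using \<open>v (shift sk) = k\<close> \<open>v (shift sj) = j\<close> Xij by simp
  next
    case True
    then have "si < p" using right_of perm_inv_app[OF u] si_def sk_def by simp
    have sja: "sj < a"
    proof (rule ccontr)
      assume "\<not> sj < a"
      then have "u sj < u p" using smaller[of sj] \<open>sj < si\<close> \<open>si < p\<close> by simp
      then show False using s True ikj by simp
    qed
    show ?thesis
    proof (cases "si < a")
      case True
      have "X (v sj) \<le> X (v a)"
        using cone_inversion_le[OF v X, of sj a] sja s vout[of sj] va \<open>k = u p\<close> ikj ap by auto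
      then show ?thesis using vout[of sj] va sja s \<open>k = u p\<close> Xij by simp
    next
      case False
      then have "same_run u a si"
        using same_run_shrink[of u sj si a] run same_run_sym[of u si sj] sja \<open>sj < si\<close> by simp
      then have "same_block n u (u a) i" using same_block_pos[OF u, of a si] ap s by simp
      then have "X (u a) = X i" using cone_block_eq[OF X u_blocks_in_v] by blast
      then show ?thesis using cone_block_eq[OF X moved_joins] \<open>k = u p\<close> by simp
    qed
  qed
qed

lemma cone_v_sub_u: "cone n v \<subseteq> cone n u"
proof
  fix X assume X: "X \<in> cone n v"
  have outside: "\<forall>i. i \<notin> {1..n} \<longrightarrow> X i = 0" and sum0: "(\<Sum>i\<in>{1..n}. X i) = 0"
    using X unfolding cone_def by auto
  have blocks: "\<forall>i j. same_block n u i j \<longrightarrow> X i = X j"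
    using cone_block_eq[OF X u_blocks_in_v] by blast
  have between: "\<forall>i j k. i < k \<and> k < j \<and> same_block n u i j \<and> \<not> same_block n u i k \<and> k \<in> {1..n} \<longrightarrow>
      (inv u k < inv u i \<longrightarrow> X k \<le> X i) \<and> (inv u i < inv u k \<longrightarrow> X i \<le> X k)"
    using cone_v_left[OF X] cone_v_right[OF X] by blast
  show "X \<in> cone n u" unfolding cone_def using outside sum0 blocks between by blast
qed

text \<open>An intermediate element z between u and v has the blocks of v if y is joined to u a in z,
  and the blocks of u otherwise.\<close>
lemma blocks_between_joined:
  assumes z: "z permutes {1..n}" and uz: "\<And>c d. same_block n u c d \<Longrightarrow> same_block n z c d"
    and joined: "same_block n z (u p) (u a)" and vblk: "same_block n v c d"
  shows "same_block n z c d"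
  using v_blocks_cases[OF vblk]
proof
  assume "(c = u p \<or> same_block n u c (u a)) \<and> (d = u p \<or> same_block n u d (u a))"
  then have "same_block n z c (u a)" "same_block n z d (u a)" using joined uz by blast+
  then show ?thesis using same_block_trans[OF z] same_block_sym by metis
qed (rule uz)

lemma blocks_between_separate:
  assumes z: "z permutes {1..n}" and uz: "\<And>c d. same_block n u c d \<Longrightarrow> same_block n z c d"
    and zv: "\<And>c d. same_block n z c d \<Longrightarrow> same_block n v c d"
    and separate: "\<not> same_block n z (u p) (u a)" and zblk: "same_block n z c d"
  shows "same_block n u c d"
  using v_blocks_cases[OF zv[OF zblk]]
proof
  assume h: "(c = u p \<or> same_block n u c (u a)) \<and> (d = u p \<or> same_block n u d (u a))"
  show ?thesis
  proof (cases "c = u p")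
    case c: True
    show ?thesis
    proof (cases "d = u p")
      case True
      then show ?thesis using c same_block_refl moved_in by simp
    next
      case False
      then have "same_block n z d (u a)" using h uz by blast
      then have "same_block n z (u p) (u a)" using same_block_trans[OF z] zblk c by metis
      then show ?thesis using separate by simp
    qed
  next
    case c: False
    then have cy: "same_block n u c (u a)" using h by blast
    show ?thesis
    proof (cases "d = u p")
      case True
      have "same_block n z c (u a)" using cy uz by blast
      then have "same_block n z (u p) (u a)" using same_block_trans[OF z] zblk True same_block_sym by metis
      then show ?thesis using separate by simp
    next
      case False
      then have "same_block n u d (u a)" using h by blast
      then show ?thesis using same_block_trans[OF u cy] same_block_sym by metis
    qed
  qed
qed

theorem hop_covers: "covers (Sn n) (shard_le n) u v"
proof -
  have "u \<noteq> v" using va target_letter by auto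
  moreover have "\<not> (\<exists>z\<in>Sn n. shard_le n u z \<and> shard_le n z v \<and> z \<noteq> u \<and> z \<noteq> v)"
  proof
    assume "\<exists>z\<in>Sn n. shard_le n u z \<and> shard_le n z v \<and> z \<noteq> u \<and> z \<noteq> v"
    then obtain z where z: "z permutes {1..n}" and c1: "cone n z \<subseteq> cone n u"
      and c2: "cone n v \<subseteq> cone n z" and "z \<noteq> u" "z \<noteq> v" by (auto simp: shard_le_def Sn_def)
    have uz: "\<And>c d. same_block n u c d \<Longrightarrow> same_block n z c d" using cone_refines_blocks[OF z c1] .
    have zv: "\<And>c d. same_block n z c d \<Longrightarrow> same_block n v c d" using cone_refines_blocks[OF v c2] .
    show False
    proof (cases "same_block n z (u p) (u a)")
      case True
      then have "z = v" using cone_determines_perm[OF z v _ c2] blocks_between_joined[OF z uz] by blast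
      then show False using \<open>z \<noteq> v\<close> by simp
    next
      case False
      then have "u = z" using cone_determines_perm[OF u z _ c1] blocks_between_separate[OF z uz zv] by blast
      then show False using \<open>z \<noteq> u\<close> by simp
    qed
  qed
  ultimately show ?thesis
    using u v cone_v_sub_u unfolding covers_def shard_le_def Sn_def by blast
qed

end

section \<open>Permutations as lists\<close>

text \<open>The permutation whose one-line word is xs (positions counted from 1).\<close>
definition perm_of_list :: "nat list \<Rightarrow> nat \<Rightarrow> nat" where
  "perm_of_list xs i = (if 1 \<le> i \<and> i \<le> length xs then xs ! (i - 1) else i)"

lemma length_of_perm_list: "distinct xs \<Longrightarrow> set xs = {1..n} \<Longrightarrow> length xs = n"
  using distinct_card[of xs] by simp

lemma perm_of_list_permutes:
  assumes d: "distinct xs" and s: "set xs = {1..n}"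
  shows "perm_of_list xs permutes {1..n}"
proof (rule inj_imp_permutes)
  have l: "length xs = n" using length_of_perm_list[OF d s] .
  show "inj_on (perm_of_list xs) {1..n}"
  proof (rule inj_onI)
    fix i j assume i: "i \<in> {1..n}" and j: "j \<in> {1..n}" and e: "perm_of_list xs i = perm_of_list xs j"
    then have "xs ! (i - 1) = xs ! (j - 1)" using l by (simp add: perm_of_list_def)
    moreover have "i - 1 < length xs" "j - 1 < length xs" using i j l by auto
    ultimately have "i - 1 = j - 1" using nth_eq_iff_index_eq[OF d] by blast
    moreover have "1 \<le> i" "1 \<le> j" using i j by auto
    ultimately show "i = j" by arith
  qed
  show "finite {1..n}" by simp
  show "perm_of_list xs x \<in> {1..n}" if "x \<in> {1..n}" for x
  proof -
    have "1 \<le> x" "x \<le> n" using that by auto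
    then have "x - 1 < length xs" using l by arith
    then have "xs ! (x - 1) \<in> set xs" by (rule nth_mem)
    then show ?thesis using that l s by (simp add: perm_of_list_def)
  qed
  show "perm_of_list xs i = i" if "i \<notin> {1..n}" for i
  proof -
    have "\<not> (1 \<le> i \<and> i \<le> length xs)" using that l by auto
    then show ?thesis unfolding perm_of_list_def by (rule if_not_P)
  qed
qed

lemma list_of_perm:
  assumes w: "w permutes {1..n}"
  shows "distinct (map w [1..<n+1])" "set (map w [1..<n+1]) = {1..n}" "perm_of_list (map w [1..<n+1]) = w"
proof -
  show "distinct (map w [1..<n+1])" using permutes_inj_on[OF w] by (simp add: distinct_map)
  have "set [1..<n+1] = {1..n}" by auto
  then show "set (map w [1..<n+1]) = {1..n}" using permutes_image[OF w] by simp
  show "perm_of_list (map w [1..<n+1]) = w"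
  proof
    fix i show "perm_of_list (map w [1..<n+1]) i = w i"
    proof (cases "1 \<le> i \<and> i \<le> n")
      case True
      have "length [1..<n+1] = n" by simp
      then have ln: "i - 1 < length [1..<n+1]" using True by arith
      have "map w [1..<n+1] ! (i - 1) = w ([1..<n+1] ! (i - 1))" using nth_map[OF ln, of w] .
      also have "[1..<n+1] ! (i - 1) = i" using True by (simp del: upt_Suc)
      finally show ?thesis using True by (simp add: perm_of_list_def del: upt_Suc)
    next
      case False then show ?thesis using permutes_not_in[OF w, of i] by (auto simp: perm_of_list_def)
    qed
  qed
qed

lemma perm_of_list_inj:
  assumes "length xs = length ys" "perm_of_list xs = perm_of_list ys"
  shows "xs = ys"
proof (rule nth_equalityI)
  show "length xs = length ys" by fact
  fix i assume "i < length xs"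
  then show "xs ! i = ys ! i" using fun_cong[OF assms(2), of "i+1"] assms(1) by (simp add: perm_of_list_def)
qed

text \<open>Descents of a word, counted recursively so that they add up over concatenations.\<close>
fun list_des :: "nat list \<Rightarrow> nat" where
  "list_des [] = 0"
| "list_des [x] = 0"
| "list_des (x # y # zs) = (if y < x then 1 else 0) + list_des (y # zs)"

lemma list_des_card: "list_des xs = card {i. 1 \<le> i \<and> i < length xs \<and> xs ! i < xs ! (i - 1)}"
proof (induction xs rule: list_des.induct)
  case 1
  then show ?case by simp
next
  case (2 x)
  then show ?case by simp
next
  case (3 x y zs)
  let ?T = "{i. 1 \<le> i \<and> i < length (y # zs) \<and> (y # zs) ! i < (y # zs) ! (i - 1)}"
  have eq: "{i. 1 \<le> i \<and> i < length (x # y # zs) \<and> (x # y # zs) ! i < (x # y # zs) ! (i - 1)}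
      = (if y < x then {1} else {}) \<union> Suc ` ?T"
  proof (rule set_eqI)
    fix i
    show "i \<in> {i. 1 \<le> i \<and> i < length (x # y # zs) \<and> (x # y # zs) ! i < (x # y # zs) ! (i - 1)}
      \<longleftrightarrow> i \<in> (if y < x then {1} else {}) \<union> Suc ` ?T"
    proof (cases i)
      case 0 then show ?thesis by auto
    next
      case (Suc j)
      show ?thesis
      proof (cases j)
        case 0 then show ?thesis using Suc by auto
      next
        case (Suc k)
        have "i \<in> Suc ` ?T \<longleftrightarrow> j \<in> ?T" using \<open>i = Suc j\<close> by auto
        then show ?thesis using \<open>i = Suc j\<close> Suc by auto
      qed
    qed
  qed
  have fin: "finite ?T" by (rule finite_subset[of _ "{..<length (y#zs)}"]) auto
  have "1 \<notin> Suc ` ?T" by auto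
  then have "card ((if y < x then {1} else {}) \<union> Suc ` ?T) = (if y < x then 1 else 0) + card ?T"
    using fin by (simp add: card_image)
  then show ?case using eq "3.IH" by simp
qed

lemma des_perm_of_list:
  assumes "length xs = n"
  shows "des n (perm_of_list xs) = list_des xs"
proof -
  have "descents n (perm_of_list xs) = {i. 1 \<le> i \<and> i < length xs \<and> xs ! i < xs ! (i - 1)}"
    using assms by (auto simp: descents_def perm_of_list_def)
  then show ?thesis by (simp add: des_def list_des_card)
qed

lemma list_des_append:
  "list_des (xs @ ys) = list_des xs + list_des ys + (if xs \<noteq> [] \<and> ys \<noteq> [] \<and> hd ys < last xs then 1 else 0)"
proof (induction xs rule: list_des.induct)
  case 1 then show ?case by simp
next
  case (2 x) then show ?case by (cases ys) auto
next
  case (3 x y zs) then show ?case by simp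
qed

definition avoids231_list :: "nat list \<Rightarrow> bool" where
  "avoids231_list xs \<longleftrightarrow> \<not> (\<exists>i j k. i < j \<and> j < k \<and> k < length xs \<and> xs ! k < xs ! i \<and> xs ! i < xs ! j)"

lemma avoids231_perm_of_list:
  assumes "length xs = n"
  shows "avoids231 n (perm_of_list xs) \<longleftrightarrow> avoids231_list xs"
proof
  assume a: "avoids231 n (perm_of_list xs)"
  show "avoids231_list xs" unfolding avoids231_list_def
  proof
    assume "\<exists>i j k. i < j \<and> j < k \<and> k < length xs \<and> xs ! k < xs ! i \<and> xs ! i < xs ! j"
    then obtain i j k where h: "i < j \<and> j < k \<and> k < length xs \<and> xs ! k < xs ! i \<and> xs ! i < xs ! j" by blast
    have "1 \<le> i+1 \<and> i+1 < j+1 \<and> j+1 < k+1 \<and> k+1 \<le> n \<and> perm_of_list xs (k+1) < perm_of_list xs (i+1) \<and> perm_of_list xs (i+1) < perm_of_list xs (j+1)"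
      using h assms by (simp add: perm_of_list_def)
    then show False using a unfolding avoids231_def by blast
  qed
next
  assume a: "avoids231_list xs"
  show "avoids231 n (perm_of_list xs)" unfolding avoids231_def
  proof
    assume "\<exists>i j k. 1 \<le> i \<and> i < j \<and> j < k \<and> k \<le> n \<and> perm_of_list xs k < perm_of_list xs i \<and> perm_of_list xs i < perm_of_list xs j"
    then obtain i j k where h: "1 \<le> i \<and> i < j \<and> j < k \<and> k \<le> n \<and> perm_of_list xs k < perm_of_list xs i \<and> perm_of_list xs i < perm_of_list xs j" by blast
    have "perm_of_list xs i = xs ! (i - 1)" "perm_of_list xs j = xs ! (j - 1)" "perm_of_list xs k = xs ! (k - 1)" using h assms by (auto simp: perm_of_list_def)
    then have "i - 1 < j - 1 \<and> j - 1 < k - 1 \<and> k - 1 < length xs \<and> xs ! (k-1) < xs ! (i-1) \<and> xs ! (i-1) < xs ! (j-1)"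
      using h assms by auto
    then show False using a unfolding avoids231_list_def by blast
  qed
qed

lemma avoids231_list_appendD:
  assumes "avoids231_list (xs @ ys)"
  shows "avoids231_list xs" "avoids231_list ys"
proof -
  show "avoids231_list xs"
    unfolding avoids231_list_def
  proof
    assume "\<exists>i j k. i < j \<and> j < k \<and> k < length xs \<and> xs ! k < xs ! i \<and> xs ! i < xs ! j"
    then obtain i j k where "i < j" "j < k" "k < length xs" "xs ! k < xs ! i" "xs ! i < xs ! j"
      by blast
    then have "i < j \<and> j < k \<and> k < length (xs @ ys) \<and> (xs @ ys) ! k < (xs @ ys) ! i
      \<and> (xs @ ys) ! i < (xs @ ys) ! j" by (simp add: nth_append)
    then show False using assms unfolding avoids231_list_def by blast
  qed
  show "avoids231_list ys"
    unfolding avoids231_list_def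
  proof
    assume "\<exists>i j k. i < j \<and> j < k \<and> k < length ys \<and> ys ! k < ys ! i \<and> ys ! i < ys ! j"
    then obtain i j k where "i < j" "j < k" "k < length ys" "ys ! k < ys ! i" "ys ! i < ys ! j"
      by blast
    then have "length xs + i < length xs + j \<and> length xs + j < length xs + k \<and> length xs + k < length (xs @ ys)
      \<and> (xs @ ys) ! (length xs + k) < (xs @ ys) ! (length xs + i)
      \<and> (xs @ ys) ! (length xs + i) < (xs @ ys) ! (length xs + j)" by simp
    then show False using assms unfolding avoids231_list_def by blast
  qed
qed

text \<open>In a 231-avoiding word whose maximum m splits it as L m R, all of L lies below all of R
  (otherwise a, m, b with b < a would be an occurrence of 231).\<close>
lemma avoids231_list_max_split:
  assumes av: "avoids231_list (L @ m # R)" and d: "distinct (L @ m # R)" and lt: "\<forall>y\<in>set L. y < m"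
  shows "\<forall>a\<in>set L. \<forall>b\<in>set R. a < b"
proof (intro ballI)
  fix a b assume ab: "a \<in> set L" "b \<in> set R"
  show "a < b"
  proof (rule ccontr)
    assume "\<not> a < b"
    moreover have "a \<noteq> b" using d ab by auto
    ultimately have ba: "b < a" by simp
    obtain i where i: "i < length L" "L ! i = a" using ab(1) by (auto simp: in_set_conv_nth)
    obtain k where k: "k < length R" "R ! k = b" using ab(2) by (auto simp: in_set_conv_nth)
    let ?xs = "L @ m # R" and ?k = "length L + 1 + k"
    have "i < length L \<and> length L < ?k \<and> ?k < length ?xs \<and> ?xs ! ?k < ?xs ! i \<and> ?xs ! i < ?xs ! length L"
      using i k ba lt ab by (simp add: nth_append)
    then show False using av unfolding avoids231_list_def by blast
  qed
qed

lemma avoids231_list_join: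
  assumes L: "avoids231_list L" and R: "avoids231_list R" and sep: "\<forall>a\<in>set L. \<forall>b\<in>set R. a < b"
    and lt: "\<forall>y\<in>set L. y < m" "\<forall>y\<in>set R. y < m"
  shows "avoids231_list (L @ m # R)"
  unfolding avoids231_list_def
proof
  let ?xs = "L @ m # R" and ?l = "length L"
  assume "\<exists>i j k. i < j \<and> j < k \<and> k < length ?xs \<and> ?xs ! k < ?xs ! i \<and> ?xs ! i < ?xs ! j"
  then obtain i j k where h: "i < j" "j < k" "k < length ?xs" "?xs ! k < ?xs ! i" "?xs ! i < ?xs ! j"
    by blast
  have le_m: "?xs ! t \<le> m" if "t < length ?xs" for t
    using nth_mem[OF that] lt by (auto simp: less_imp_le)
  have in_R: "?xs ! t = R ! (t - ?l - 1) \<and> t - ?l - 1 < length R" if "?l < t" "t < length ?xs" for t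
    using that by (simp add: nth_append)
  consider "k < ?l" | "k = ?l" | "?l < k" "?l < i" | "?l < k" "i = ?l" | "?l < k" "i < ?l"
    by linarith
  then show False
  proof cases
    case 1
    then have "i < j \<and> j < k \<and> k < length L \<and> L ! k < L ! i \<and> L ! i < L ! j" using h by (simp add: nth_append)
    then show False using L unfolding avoids231_list_def by blast
  next
    case 2
    then show False using h le_m[of i] by simp
  next
    case 3
    then have "i - ?l - 1 < j - ?l - 1" "j - ?l - 1 < k - ?l - 1" using h by arith+
    then have "i - ?l - 1 < j - ?l - 1 \<and> j - ?l - 1 < k - ?l - 1 \<and> k - ?l - 1 < length R
       \<and> R ! (k - ?l - 1) < R ! (i - ?l - 1) \<and> R ! (i - ?l - 1) < R ! (j - ?l - 1)"
      using 3 h in_R[of i] in_R[of j] in_R[of k] by auto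
    then show False using R unfolding avoids231_list_def by blast
  next
    case 4
    then show False using h le_m[of j] by simp
  next
    case 5
    then have "?xs ! i \<in> set L" "?xs ! k \<in> set R" using h in_R[of k] by (auto simp: nth_append)
    then show False using sep h by fastforce
  qed
qed

section \<open>Decreasing binary trees\<close>

datatype dtree = Leaf | Node dtree nat dtree

primrec inorder :: "dtree \<Rightarrow> nat list" where
  "inorder Leaf = []"
| "inorder (Node l x r) = inorder l @ x # inorder r"

primrec decreasing :: "dtree \<Rightarrow> bool" where
  "decreasing Leaf = True"
| "decreasing (Node l x r) = (decreasing l \<and> decreasing r \<and>
     (\<forall>y\<in>set (inorder l). y < x) \<and> (\<forall>y\<in>set (inorder r). y < x) \<and>
     set (inorder l) \<inter> set (inorder r) = {})"

lemma inorder_Leaf: "inorder t = [] \<longleftrightarrow> t = Leaf"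
  by (cases t) auto

lemma decreasing_distinct: "decreasing t \<Longrightarrow> distinct (inorder t)"
  by (induction t) auto

text \<open>Every word of distinct letters is the in-order reading of a decreasing tree: split at the
  maximum and recurse.\<close>
lemma decreasing_tree_exists: "distinct xs \<Longrightarrow> \<exists>t. decreasing t \<and> inorder t = xs"
proof (induction "length xs" arbitrary: xs rule: less_induct)
  case less
  show ?case
  proof (cases "xs = []")
    case True
    then show ?thesis by (intro exI[of _ Leaf]) simp
  next
    case False
    define m where "m = Max (set xs)"
    have "m \<in> set xs" using False m_def by simp
    then obtain L R where xs: "xs = L @ m # R" using split_list by metis
    have below: "y < m" if "y \<in> set L \<union> set R" for y
    proof -
      have "y \<in> set xs" using that xs by auto
      then have "y \<le> m" unfolding m_def by simp
      moreover have "y \<noteq> m" using that xs less.prems by auto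
      ultimately show "y < m" by simp
    qed
    have d: "distinct L" "distinct R" "set L \<inter> set R = {}" using less.prems xs by auto
    obtain tl where tl: "decreasing tl" "inorder tl = L" using less.hyps[of L] d xs by auto
    obtain tr where tr: "decreasing tr" "inorder tr = R" using less.hyps[of R] d xs by auto
    have "decreasing (Node tl m tr) \<and> inorder (Node tl m tr) = xs"
      using tl tr xs below d by simp
    then show ?thesis by blast
  qed
qed

text \<open>The root of a decreasing tree is the maximum of its reading, so the reading determines the
  tree.\<close>
lemma decreasing_root_max: "decreasing (Node l x r) \<Longrightarrow> Max (set (inorder (Node l x r))) = x"
  by (intro Max_eqI) (auto simp: less_imp_le)

lemma inorder_inj: "decreasing t1 \<Longrightarrow> decreasing t2 \<Longrightarrow> inorder t1 = inorder t2 \<Longrightarrow> t1 = t2"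
proof (induction t1 arbitrary: t2)
  case Leaf
  then show ?case using inorder_Leaf by metis
next
  case (Node l x r)
  obtain l2 x2 r2 where t2: "t2 = Node l2 x2 r2"
    using Node.prems(3) by (cases t2) auto
  have "x2 = Max (set (inorder t2))" using decreasing_root_max Node.prems(2) t2 by simp
  also have "\<dots> = x" using decreasing_root_max[OF Node.prems(1)] Node.prems(3) by metis
  finally have x: "x2 = x" .
  have e: "inorder l @ x # inorder r = inorder l2 @ x # inorder r2" using Node.prems(3) t2 x by simp
  have nl: "x \<notin> set (inorder l)" "x \<notin> set (inorder l2)" using Node.prems t2 x by auto
  have "takeWhile (\<lambda>y. y \<noteq> x) (inorder l @ x # inorder r) = inorder l"
    by (subst takeWhile_append2) (use nl in auto)
  moreover have "takeWhile (\<lambda>y. y \<noteq> x) (inorder l2 @ x # inorder r2) = inorder l2"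
    by (subst takeWhile_append2) (use nl in auto)
  ultimately have "inorder l = inorder l2" "inorder r = inorder r2" using e by auto
  then show ?case using Node.IH Node.prems t2 x by simp
qed

text \<open>The statistics below: the unary nodes, the
  number of binary nodes, the unary nodes with a right child, and the number of nodes with a
  nonempty right subtree (these are the descents of the reading).\<close>
primrec normalize :: "dtree \<Rightarrow> dtree" where
  "normalize Leaf = Leaf"
| "normalize (Node l x r) =
     (if l = Leaf then Node (normalize r) x Leaf
      else if r = Leaf then Node (normalize l) x Leaf else Node (normalize l) x (normalize r))"

primrec normal :: "dtree \<Rightarrow> bool" where
  "normal Leaf = True"
| "normal (Node l x r) = (normal l \<and> normal r \<and> (l = Leaf \<longrightarrow> r = Leaf))"

primrec unary :: "dtree \<Rightarrow> nat set" where
  "unary Leaf = {}"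
| "unary (Node l x r) = unary l \<union> unary r \<union> (if (l = Leaf) \<noteq> (r = Leaf) then {x} else {})"

primrec binary :: "dtree \<Rightarrow> nat" where
  "binary Leaf = 0"
| "binary (Node l x r) = binary l + binary r + (if l \<noteq> Leaf \<and> r \<noteq> Leaf then 1 else 0)"

primrec right_unary :: "dtree \<Rightarrow> nat set" where
  "right_unary Leaf = {}"
| "right_unary (Node l x r) =
     right_unary l \<union> right_unary r \<union> (if l = Leaf \<and> r \<noteq> Leaf then {x} else {})"

primrec right_count :: "dtree \<Rightarrow> nat" where
  "right_count Leaf = 0"
| "right_count (Node l x r) = right_count l + right_count r + (if r \<noteq> Leaf then 1 else 0)"

primrec flip :: "nat set \<Rightarrow> dtree \<Rightarrow> dtree" where
  "flip S Leaf = Leaf"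
| "flip S (Node l x r) =
     (if r = Leaf \<and> x \<in> S then Node Leaf x (flip S l) else Node (flip S l) x (flip S r))"

primrec split_ordered :: "dtree \<Rightarrow> bool" where
  "split_ordered Leaf = True"
| "split_ordered (Node l x r) = (split_ordered l \<and> split_ordered r \<and>
     (\<forall>a\<in>set (inorder l). \<forall>b\<in>set (inorder r). a < b))"

lemma normalize_Leaf: "normalize t = Leaf \<longleftrightarrow> t = Leaf"
  by (cases t) auto

lemma flip_Leaf: "flip S t = Leaf \<longleftrightarrow> t = Leaf"
  by (cases t) auto

lemma labels_normalize: "set (inorder (normalize t)) = set (inorder t)"
  by (induction t) auto

lemma labels_flip: "set (inorder (flip S t)) = set (inorder t)"
  by (induction t) auto

lemma decreasing_normalize: "decreasing t \<Longrightarrow> decreasing (normalize t)"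
  by (induction t) (auto simp: labels_normalize)

lemma decreasing_flip: "decreasing t \<Longrightarrow> decreasing (flip S t)"
  by (induction t) (auto simp: labels_flip)

lemma normal_normalize: "normal (normalize t)"
  by (induction t) (auto simp: normalize_Leaf)

lemma normalize_flip: "normal k \<Longrightarrow> normalize (flip S k) = k"
  by (induction k) (auto simp: flip_Leaf)

lemma flip_cong: "(\<And>y. y \<in> set (inorder k) \<Longrightarrow> y \<in> S \<longleftrightarrow> y \<in> S') \<Longrightarrow> flip S k = flip S' k"
  by (induction k) auto

lemma unary_labels: "unary t \<subseteq> set (inorder t)"
  by (induction t) auto

lemma right_unary_labels: "right_unary t \<subseteq> set (inorder t)"
  by (induction t) auto

lemma right_unary_unary: "right_unary t \<subseteq> unary t"
  by (induction t) auto

lemma unary_normalize: "unary (normalize t) = unary t"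
  by (induction t) (auto simp: normalize_Leaf)

lemma binary_flip: "normal k \<Longrightarrow> binary (flip S k) = binary k"
  by (induction k) (auto simp: flip_Leaf)

lemma split_ordered_flip: "normal k \<Longrightarrow> split_ordered (flip S k) \<longleftrightarrow> split_ordered k"
  by (induction k) (auto simp: labels_flip)

lemma flip_right_unary: "decreasing t \<Longrightarrow> flip (right_unary t) (normalize t) = t"
proof (induction t)
  case (Node l x r)
  have x: "x \<notin> right_unary l" "x \<notin> right_unary r"
    using right_unary_labels[of l] right_unary_labels[of r] Node.prems by auto
  have "flip (right_unary (Node l x r)) (normalize c) = flip (right_unary c) (normalize c)"
    if "c \<in> {l, r}" for c
  proof (rule flip_cong)
    fix y assume "y \<in> set (inorder (normalize c))"
    then have "y \<in> set (inorder c)" by (simp add: labels_normalize)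
    then show "y \<in> right_unary (Node l x r) \<longleftrightarrow> y \<in> right_unary c"
      using that right_unary_labels[of l] right_unary_labels[of r] Node.prems by auto
  qed
  then have "flip (right_unary (Node l x r)) (normalize l) = l"
    "flip (right_unary (Node l x r)) (normalize r) = r" using Node by auto
  then show ?case using x by (cases "l = Leaf"; cases "r = Leaf") (auto simp: normalize_Leaf)
qed simp

lemma right_unary_flip: "normal k \<Longrightarrow> decreasing k \<Longrightarrow> right_unary (flip S k) = S \<inter> unary k"
proof (induction k)
  case (Node l x r)
  have "x \<notin> unary l" "x \<notin> unary r" using unary_labels[of l] unary_labels[of r] Node.prems by auto
  then show ?case using Node by (cases "l = Leaf"; cases "r = Leaf") (auto simp: flip_Leaf)
qed simp

lemma card_disjoint_Un_optional:
  assumes "finite A" "finite B" "A \<inter> B = {}" "x \<notin> A" "x \<notin> B"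
  shows "card (A \<union> B \<union> (if P then {x} else {})) = card A + card B + (if P then 1 else 0)"
  using assms by (simp add: card_Un_disjoint)

lemma right_count_eq: "decreasing t \<Longrightarrow> right_count t = binary t + card (right_unary t)"
proof (induction t)
  case (Node l x r)
  have "finite (right_unary l)" "finite (right_unary r)"
    using right_unary_labels[of l] right_unary_labels[of r] finite_subset by auto
  moreover have "right_unary l \<inter> right_unary r = {}" "x \<notin> right_unary l" "x \<notin> right_unary r"
    using right_unary_labels[of l] right_unary_labels[of r] Node.prems by auto
  ultimately have "card (right_unary (Node l x r))
      = card (right_unary l) + card (right_unary r) + (if l = Leaf \<and> r \<noteq> Leaf then 1 else 0)"
    unfolding right_unary.simps by (rule card_disjoint_Un_optional)
  then show ?case using Node by auto
qed simp

lemma card_labels: "decreasing t \<Longrightarrow> t \<noteq> Leaf \<Longrightarrow> card (set (inorder t)) = 2 * binary t + card (unary t) + 1"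
proof (induction t)
  case (Node l x r)
  have d: "distinct (inorder (Node l x r))" using decreasing_distinct Node.prems by blast
  have c: "card (set (inorder (Node l x r))) = length (inorder l) + length (inorder r) + 1"
    using distinct_card[OF d] by simp
  have cl: "card (set (inorder l)) = length (inorder l)" "card (set (inorder r)) = length (inorder r)"
    using d by (auto simp: distinct_card)
  have "finite (unary l)" "finite (unary r)"
    using unary_labels[of l] unary_labels[of r] finite_subset by auto
  moreover have "unary l \<inter> unary r = {}" "x \<notin> unary l" "x \<notin> unary r"
    using unary_labels[of l] unary_labels[of r] Node.prems by auto
  ultimately have "card (unary (Node l x r))
      = card (unary l) + card (unary r) + (if (l = Leaf) \<noteq> (r = Leaf) then 1 else 0)"
    unfolding unary.simps by (rule card_disjoint_Un_optional)
  then show ?case using Node c cl by (cases "l = Leaf"; cases "r = Leaf") (auto simp: inorder_Leaf)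
qed simp

lemma list_des_inorder: "decreasing t \<Longrightarrow> list_des (inorder t) = right_count t"
proof (induction t)
  case (Node l x r)
  have "inorder l \<noteq> [] \<Longrightarrow> last (inorder l) < x" "inorder r \<noteq> [] \<Longrightarrow> hd (inorder r) < x"
    using Node.prems by simp_all
  then have "list_des (inorder l @ x # inorder r) = list_des (inorder l) + list_des (inorder r)
      + (if r \<noteq> Leaf then 1 else 0)"
    using list_des_append[of "inorder l" "x # inorder r"] list_des_append[of "[x]" "inorder r"]
      inorder_Leaf[of r] by auto
  then show ?case using Node by simp
qed simp

lemma avoids231_inorder: "decreasing t \<Longrightarrow> avoids231_list (inorder t) \<longleftrightarrow> split_ordered t"
proof (induction t)
  case (Node l x r)
  have d: "distinct (inorder l @ x # inorder r)" using decreasing_distinct Node.prems by force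
  have lt: "\<forall>y\<in>set (inorder l). y < x" "\<forall>y\<in>set (inorder r). y < x" using Node.prems by auto
  have "avoids231_list (inorder l @ x # inorder r) \<longleftrightarrow> avoids231_list (inorder l) \<and>
      avoids231_list (inorder r) \<and> (\<forall>a\<in>set (inorder l). \<forall>b\<in>set (inorder r). a < b)"
  proof
    assume av: "avoids231_list (inorder l @ x # inorder r)"
    then have "avoids231_list ([x] @ inorder r)" using avoids231_list_appendD(2) by simp
    then show "avoids231_list (inorder l) \<and> avoids231_list (inorder r) \<and>
        (\<forall>a\<in>set (inorder l). \<forall>b\<in>set (inorder r). a < b)"
      using avoids231_list_appendD avoids231_list_max_split[OF av d lt(1)] av by blast
  qed (use avoids231_list_join lt in blast)
  then show ?case using Node by simp
qed (simp add: avoids231_list_def)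

section \<open>Flips are hops\<close>

definition hop_words :: "nat list \<Rightarrow> nat list \<Rightarrow> nat \<Rightarrow> bool" where
  "hop_words xs ys y \<longleftrightarrow> (\<exists>P A Q. xs = P @ A @ y # Q \<and> ys = P @ y # A @ Q \<and> A \<noteq> [] \<and>
     (\<forall>z\<in>set A. z < y) \<and> (P = [] \<or> y < last P) \<and> (Q = [] \<or> y < hd Q))"

lemma hop_words_base: "A \<noteq> [] \<Longrightarrow> \<forall>z\<in>set A. z < y \<Longrightarrow> hop_words (A @ [y]) (y # A) y"
  unfolding hop_words_def by (intro exI[of _ "[]"] exI[of _ A] exI[of _ "[]"]) simp

lemma hop_words_prepend:
  assumes "hop_words xs ys y" "y < x"
  shows "hop_words (zs @ x # xs) (zs @ x # ys) y"
proof -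
  obtain P A Q where h: "xs = P @ A @ y # Q" "ys = P @ y # A @ Q" "A \<noteq> []" "\<forall>z\<in>set A. z < y"
    "P = [] \<or> y < last P" "Q = [] \<or> y < hd Q" using assms(1) unfolding hop_words_def by blast
  then show ?thesis unfolding hop_words_def using assms(2)
    by (intro exI[of _ "zs @ x # P"] exI[of _ A] exI[of _ Q]) auto
qed

lemma hop_words_append:
  assumes "hop_words xs ys y" "y < x"
  shows "hop_words (xs @ x # zs) (ys @ x # zs) y"
proof -
  obtain P A Q where h: "xs = P @ A @ y # Q" "ys = P @ y # A @ Q" "A \<noteq> []" "\<forall>z\<in>set A. z < y"
    "P = [] \<or> y < last P" "Q = [] \<or> y < hd Q" using assms(1) unfolding hop_words_def by blast
  then show ?thesis unfolding hop_words_def using assms(2)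
    by (intro exI[of _ P] exI[of _ A] exI[of _ "Q @ x # zs"]) (cases Q; auto)
qed

lemma flip_is_hop:
  "normal k \<Longrightarrow> decreasing k \<Longrightarrow> y \<in> unary k \<Longrightarrow> y \<notin> S \<Longrightarrow>
   hop_words (inorder (flip S k)) (inorder (flip (insert y S) k)) y"
proof (induction k)
  case (Node l x r)
  have same: "flip (insert y S) c = flip S c" if "y \<notin> set (inorder c)" for c
    by (rule flip_cong) (use that Node.prems(4) in auto)
  show ?case
  proof (cases "x = y")
    case True
    then have "y \<notin> unary l" "y \<notin> unary r" using unary_labels[of l] unary_labels[of r] Node.prems by auto
    then have lr: "l \<noteq> Leaf" "r = Leaf" using Node.prems(1,3) True by (auto split: if_splits)
    moreover have "\<forall>z\<in>set (inorder (flip S l)). z < y" using Node.prems(2) True by (simp add: labels_flip)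
    moreover have "flip (insert y S) l = flip S l" using same Node.prems(2) True by auto
    ultimately show ?thesis
      using hop_words_base[of "inorder (flip S l)" y] Node.prems True
      by (simp add: inorder_Leaf flip_Leaf)
  next
    case False
    then consider "y \<in> unary l" | "y \<in> unary r" using Node.prems(3) by (auto split: if_splits)
    then show ?thesis
    proof cases
      case 1
      then have "y \<in> set (inorder l)" using unary_labels by blast
      then have y: "y \<in> set (inorder l)" "y < x" "y \<notin> set (inorder r)"
        using Node.prems(2) by auto
      have IH: "hop_words (inorder (flip S l)) (inorder (flip (insert y S) l)) y"
        using Node.IH(1) Node.prems 1 by auto
      show ?thesis
      proof (cases "r = Leaf \<and> x \<in> S")
        case True
        then show ?thesis using hop_words_prepend[OF IH y(2), of "[]"] False by simp
      next
        case no_flip: False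
        then have "flip S (Node l x r) = Node (flip S l) x (flip S r)"
          "flip (insert y S) (Node l x r) = Node (flip (insert y S) l) x (flip S r)"
          using same[OF y(3)] \<open>x \<noteq> y\<close> by auto
        then show ?thesis using hop_words_append[OF IH y(2)] by simp
      qed
    next
      case 2
      then have "y \<in> set (inorder r)" using unary_labels by blast
      then have y: "y < x" "y \<notin> set (inorder l)" "r \<noteq> Leaf"
        using Node.prems(2) by auto
      have IH: "hop_words (inorder (flip S r)) (inorder (flip (insert y S) r)) y"
        using Node.IH(2) Node.prems 2 by auto
      show ?thesis using hop_words_prepend[OF IH y(1)] same[OF y(2)] y(3) by simp
    qed
  qed
qed simp

lemma perm_of_list_prefix: "t \<le> length P \<Longrightarrow> perm_of_list (P @ X) t = perm_of_list (P @ Y) t"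
  by (auto simp: perm_of_list_def nth_append)

lemma perm_of_list_suffix:
  "length X = length Y \<Longrightarrow> length X < t \<Longrightarrow> perm_of_list (X @ Q) t = perm_of_list (Y @ Q) t"
  by (auto simp: perm_of_list_def nth_append)

lemma hop_words_left_hop:
  assumes hw: "hop_words xs ys y" and d: "distinct xs" and s: "set xs = {1..n}"
  shows "\<exists>a p. left_hop n (perm_of_list xs) (perm_of_list ys) a p"
proof -
  obtain P A Q where h: "xs = P @ A @ y # Q" "ys = P @ y # A @ Q" "A \<noteq> []" "\<forall>z\<in>set A. z < y"
    "P = [] \<or> y < last P" "Q = [] \<or> y < hd Q" using hw unfolding hop_words_def by blast
  define l m where "l = length P" and "m = length A"
  have ln: "length xs = n" using length_of_perm_list[OF d s] .
  have m: "0 < m" using h(3) m_def by simp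
  have "left_hop n (perm_of_list xs) (perm_of_list ys) (l + 1) (l + m + 1)"
  proof
    show "perm_of_list xs permutes {1..n}" using perm_of_list_permutes[OF d s] .
    show "perm_of_list ys permutes {1..n}" using perm_of_list_permutes[of ys n] d s h(1,2) by auto
    show "1 \<le> l + 1" "l + 1 < l + m + 1" "l + m + 1 \<le> n" using m ln h(1) l_def m_def by auto
    show "perm_of_list ys (l + 1) = perm_of_list xs (l + m + 1)"
      using ln h(1,2) l_def m_def by (simp add: perm_of_list_def nth_append)
    show "perm_of_list ys t = perm_of_list xs (t - 1)" if "l + 1 < t" "t \<le> l + m + 1" for t
      using that ln h(1,2) l_def m_def by (auto simp: perm_of_list_def nth_append nth_Cons' Suc_diff_Suc)
    show "perm_of_list ys t = perm_of_list xs t" if "t < l + 1 \<or> l + m + 1 < t" for t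
      using that perm_of_list_prefix[of t P "y # A @ Q" "A @ y # Q"]
        perm_of_list_suffix[of "P @ y # A" "P @ A @ [y]" t Q] h(1,2) l_def m_def by auto
    show "perm_of_list xs t < perm_of_list xs (l + m + 1)" if "l + 1 \<le> t" "t < l + m + 1" for t
      using that ln h(1,4) l_def m_def by (auto simp: perm_of_list_def nth_append)
    show "perm_of_list xs (l + m + 1) < perm_of_list xs (l + 1 - 1)" if "1 < l + 1"
      using that ln h(1,5) l_def m_def by (auto simp: perm_of_list_def nth_append last_conv_nth Suc_le_eq)
    show "perm_of_list xs (l + m + 1) < perm_of_list xs (l + m + 1 + 1)" if "l + m + 1 < n"
      using that ln h(1,6) l_def m_def by (auto simp: perm_of_list_def nth_append hd_conv_nth)
  qed
  then show ?thesis by blast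
qed

section \<open>The decomposition\<close>

lemma covers_restrict:
  "covers P le u v \<Longrightarrow> P' \<subseteq> P \<Longrightarrow> u \<in> P' \<Longrightarrow> v \<in> P' \<Longrightarrow> covers P' le u v"
  unfolding covers_def by blast

lemma boolean_parametrization:
  assumes fin: "finite U" and inj: "inj_on f (Pow U)"
    and cov: "\<And>S y. S \<subseteq> U \<Longrightarrow> y \<in> U \<Longrightarrow> y \<notin> S \<Longrightarrow> covers P le (f S) (f (insert y S))"
    and rank: "\<And>S. S \<subseteq> U \<Longrightarrow> rk (f S) = j + card S"
  shows "\<exists>\<rho>. bij_betw \<rho> (Pow {..<card U}) (f ` Pow U) \<and>
    (\<forall>S T. S \<subseteq> T \<and> T \<subseteq> {..<card U} \<and> card T = card S + 1 \<longrightarrow> covers P le (\<rho> S) (\<rho> T)) \<and>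
    (\<forall>S. S \<subseteq> {..<card U} \<longrightarrow> rk (\<rho> S) = j + card S)"
proof -
  obtain e where e: "bij_betw e {..<card U} U"
    using ex_bij_betw_nat_finite[OF fin] by (auto simp: lessThan_atLeast0)
  have inje: "inj_on e {..<card U}" and eim: "e ` {..<card U} = U"
    using e by (auto simp: bij_betw_def)
  have "bij_betw (f \<circ> image e) (Pow {..<card U}) (f ` Pow U)"
    using bij_betw_trans[OF bij_betw_image_Pow[OF e] inj_on_imp_bij_betw[OF inj]] .
  moreover have "covers P le (f (e ` S)) (f (e ` T))"
    if "S \<subseteq> T" "T \<subseteq> {..<card U}" "card T = card S + 1" for S T
  proof -
    have "finite T" using that finite_subset by blast
    then have "card (T - S) = 1" using that card_Diff_subset[of S T] finite_subset by auto
    then obtain i where "T - S = {i}" using card_1_singletonE by blast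
    then have T: "T = insert i S" "i \<notin> S" using that by auto
    have "e i \<notin> e ` S" using inj_on_image_mem_iff[OF inje] T that by auto
    moreover have "e ` S \<subseteq> U" "e i \<in> U" using T that eim by auto
    ultimately show ?thesis using cov[of "e ` S" "e i"] T by simp
  qed
  moreover have "rk (f (e ` S)) = j + card S" if "S \<subseteq> {..<card U}" for S
    using rank[of "e ` S"] card_image[OF inj_on_subset[OF inje that]] that eim by auto
  ultimately show ?thesis by (intro exI[of _ "f \<circ> image e"]) auto
qed

text \<open>If every part of a symmetric boolean decomposition of P lies inside or outside P', the parts
  inside P' form a symmetric boolean decomposition of P' (covers in P among elements of P' are
  covers in P').\<close>
lemma sym_bool_decomp_restrict:
  assumes D: "sym_bool_decomp P le rk N Q" and sub: "P' \<subseteq> P"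
    and parts: "\<forall>A\<in>Q. A \<subseteq> P' \<or> A \<inter> P' = {}"
  shows "sym_bool_decomp P' le rk N {A\<in>Q. A \<subseteq> P'}"
  unfolding sym_bool_decomp_def
proof (intro conjI ballI impI)
  note D' = D[unfolded sym_bool_decomp_def]
  have "\<Union>Q = P" "{} \<notin> Q" and disj: "\<forall>A\<in>Q. \<forall>B\<in>Q. A \<noteq> B \<longrightarrow> A \<inter> B = {}"
    using conjunct1[OF D'] conjunct1[OF conjunct2[OF D']] conjunct1[OF conjunct2[OF conjunct2[OF D']]]
    by blast+
  show "\<Union>{A\<in>Q. A \<subseteq> P'} = P'"
  proof
    show "P' \<subseteq> \<Union>{A\<in>Q. A \<subseteq> P'}"
    proof
      fix x assume x: "x \<in> P'"
      then obtain A where "A \<in> Q" "x \<in> A" using \<open>\<Union>Q = P\<close> sub by blast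
      then show "x \<in> \<Union>{A\<in>Q. A \<subseteq> P'}" using parts x by blast
    qed
  qed blast
  show "{} \<notin> {A\<in>Q. A \<subseteq> P'}" using \<open>{} \<notin> Q\<close> by simp
  show "A \<inter> B = {}" if "A \<in> {A\<in>Q. A \<subseteq> P'}" "B \<in> {A\<in>Q. A \<subseteq> P'}" "A \<noteq> B" for A B
  proof -
    have "A \<in> Q" "B \<in> Q" using that(1,2) by simp_all
    then show ?thesis using disj \<open>A \<noteq> B\<close> by blast
  qed
next
  fix A assume "A \<in> {A\<in>Q. A \<subseteq> P'}"
  then have A: "A \<in> Q" "A \<subseteq> P'" by simp_all
  obtain j and \<rho> :: "nat set \<Rightarrow> 'a" where j: "2 * j \<le> N"
    and b: "bij_betw \<rho> (Pow {..<N - 2 * j}) A"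
    and c: "\<forall>S T. S \<subseteq> T \<and> T \<subseteq> {..<N - 2 * j} \<and> card T = card S + 1 \<longrightarrow> covers P le (\<rho> S) (\<rho> T)"
    and r: "\<forall>S. S \<subseteq> {..<N - 2 * j} \<longrightarrow> rk (\<rho> S) = j + card S"
    using bspec[OF D[unfolded sym_bool_decomp_def, THEN conjunct2, THEN conjunct2, THEN conjunct2] A(1)]
    by (elim exE conjE)
  have inP': "\<rho> S \<in> P'" if "S \<subseteq> {..<N - 2 * j}" for S
    using bij_betw_apply[OF b] that A(2) by blast
  have "\<forall>S T. S \<subseteq> T \<and> T \<subseteq> {..<N - 2 * j} \<and> card T = card S + 1 \<longrightarrow> covers P' le (\<rho> S) (\<rho> T)"
  proof (intro allI impI)
    fix S T assume ST: "S \<subseteq> T \<and> T \<subseteq> {..<N - 2 * j} \<and> card T = card S + 1"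
    then have "S \<subseteq> {..<N - 2 * j}" "T \<subseteq> {..<N - 2 * j}" by auto
    then show "covers P' le (\<rho> S) (\<rho> T)"
      using covers_restrict[OF _ sub] c[rule_format, OF ST] inP' by blast
  qed
  then show "\<exists>j (\<rho> :: nat set \<Rightarrow> 'a). 2 * j \<le> N \<and> bij_betw \<rho> (Pow {..<N - 2 * j}) A \<and>
      (\<forall>S T. S \<subseteq> T \<and> T \<subseteq> {..<N - 2 * j} \<and> card T = card S + 1 \<longrightarrow> covers P' le (\<rho> S) (\<rho> T)) \<and>
      (\<forall>S. S \<subseteq> {..<N - 2 * j} \<longrightarrow> rk (\<rho> S) = j + card S)"
    using j b r by (intro exI[of _ j] exI[of _ \<rho>] conjI)
qed

definition normal_trees :: "nat \<Rightarrow> dtree set" where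
  "normal_trees n = {k. normal k \<and> decreasing k \<and> set (inorder k) = {1..n}}"

definition tree_perm :: "dtree \<Rightarrow> nat set \<Rightarrow> nat \<Rightarrow> nat" where
  "tree_perm k S = perm_of_list (inorder (flip S k))"

definition tree_class :: "dtree \<Rightarrow> (nat \<Rightarrow> nat) set" where
  "tree_class k = tree_perm k ` Pow (unary k)"

context
  fixes n :: nat and k :: dtree
  assumes k: "k \<in> normal_trees n"
begin

lemma tree_props: "normal k" "decreasing k" "set (inorder k) = {1..n}"
  using k by (auto simp: normal_trees_def)

lemma flip_props:
  "distinct (inorder (flip S k))" "set (inorder (flip S k)) = {1..n}" "length (inorder (flip S k)) = n"
proof -
  show d: "distinct (inorder (flip S k))" using decreasing_distinct decreasing_flip tree_props by blast
  show s: "set (inorder (flip S k)) = {1..n}" using labels_flip tree_props by simp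
  show "length (inorder (flip S k)) = n" using length_of_perm_list[OF d s] .
qed

lemma tree_perm_in_Sn: "tree_perm k S \<in> Sn n"
  using perm_of_list_permutes[OF flip_props(1,2)] by (simp add: Sn_def tree_perm_def)

lemma des_tree_perm: "S \<subseteq> unary k \<Longrightarrow> des n (tree_perm k S) = binary k + card S"
  using des_perm_of_list[OF flip_props(3)] list_des_inorder[OF decreasing_flip[OF tree_props(2)]]
    right_count_eq[OF decreasing_flip[OF tree_props(2)]] binary_flip[OF tree_props(1)]
    right_unary_flip[OF tree_props(1,2)]
  by (simp add: tree_perm_def Int_absorb2)

lemma avoids231_tree_perm: "avoids231 n (tree_perm k S) \<longleftrightarrow> split_ordered k"
  using avoids231_perm_of_list[OF flip_props(3)] avoids231_inorder[OF decreasing_flip[OF tree_props(2)]]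
    split_ordered_flip[OF tree_props(1)]
  by (simp add: tree_perm_def)

lemma tree_perm_inj: "tree_perm k S1 = tree_perm k S2 \<Longrightarrow> S1 \<inter> unary k = S2 \<inter> unary k"
proof -
  assume "tree_perm k S1 = tree_perm k S2"
  then have "inorder (flip S1 k) = inorder (flip S2 k)"
    using perm_of_list_inj[of "inorder (flip S1 k)" "inorder (flip S2 k)"] flip_props(3)
    unfolding tree_perm_def by simp
  then have "flip S1 k = flip S2 k"
    using inorder_inj decreasing_flip[OF tree_props(2)] by blast
  then show ?thesis using right_unary_flip[OF tree_props(1,2)] by metis
qed

lemma tree_perm_covers:
  assumes "y \<in> unary k" "y \<notin> S"
  shows "covers (Sn n) (shard_le n) (tree_perm k S) (tree_perm k (insert y S))"
proof -
  have "hop_words (inorder (flip S k)) (inorder (flip (insert y S) k)) y"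
    using flip_is_hop[OF tree_props(1,2) assms] .
  then obtain a p where "left_hop n (tree_perm k S) (tree_perm k (insert y S)) a p"
    using hop_words_left_hop flip_props unfolding tree_perm_def by blast
  then show ?thesis by (rule left_hop.hop_covers)
qed

lemma tree_class_boolean:
  assumes n1: "1 \<le> n"
  shows "\<exists>j (\<rho> :: nat set \<Rightarrow> nat \<Rightarrow> nat). 2 * j \<le> n - 1 \<and>
    bij_betw \<rho> (Pow {..<n - 1 - 2 * j}) (tree_class k) \<and>
    (\<forall>S T. S \<subseteq> T \<and> T \<subseteq> {..<n - 1 - 2 * j} \<and> card T = card S + 1 \<longrightarrow>
       covers (Sn n) (shard_le n) (\<rho> S) (\<rho> T)) \<and>
    (\<forall>S. S \<subseteq> {..<n - 1 - 2 * j} \<longrightarrow> des n (\<rho> S) = j + card S)"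
proof -
  have "k \<noteq> Leaf" using tree_props(3) n1 by auto
  then have n: "n = 2 * binary k + card (unary k) + 1"
    using card_labels[OF tree_props(2)] tree_props(3) by simp
  have "finite (unary k)" using unary_labels[of k] tree_props(3) finite_subset by auto
  moreover have "inj_on (tree_perm k) (Pow (unary k))"
  proof (rule inj_onI)
    fix S1 S2 assume "S1 \<in> Pow (unary k)" "S2 \<in> Pow (unary k)" "tree_perm k S1 = tree_perm k S2"
    then show "S1 = S2" using tree_perm_inj[of S1 S2] by (simp add: Int_absorb2)
  qed
  ultimately have "\<exists>\<rho>. bij_betw \<rho> (Pow {..<card (unary k)}) (tree_class k) \<and>
    (\<forall>S T. S \<subseteq> T \<and> T \<subseteq> {..<card (unary k)} \<and> card T = card S + 1 \<longrightarrow>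
       covers (Sn n) (shard_le n) (\<rho> S) (\<rho> T)) \<and>
    (\<forall>S. S \<subseteq> {..<card (unary k)} \<longrightarrow> des n (\<rho> S) = binary k + card S)"
    unfolding tree_class_def
    by (rule boolean_parametrization) (simp_all add: tree_perm_covers des_tree_perm)
  moreover have "n - 1 - 2 * binary k = card (unary k)" "2 * binary k \<le> n - 1" using n by simp_all
  ultimately show ?thesis by (intro exI[of _ "binary k"]) simp
qed

end

text \<open>Every permutation lies in the class of the normal form of its decreasing tree.\<close>
lemma tree_classes_cover:
  assumes w: "w \<in> Sn n"
  shows "\<exists>k\<in>normal_trees n. w \<in> tree_class k"
proof -
  have wp: "w permutes {1..n}" using w by (simp add: Sn_def)
  define xs where "xs = map w [1..<n+1]"
  have xs: "distinct xs" "set xs = {1..n}" "perm_of_list xs = w" using list_of_perm[OF wp] xs_def by auto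
  obtain t where t: "decreasing t" "inorder t = xs" using decreasing_tree_exists[OF xs(1)] by blast
  have "normalize t \<in> normal_trees n"
    unfolding normal_trees_def using normal_normalize decreasing_normalize[OF t(1)] labels_normalize t xs by auto
  moreover have "right_unary t \<in> Pow (unary (normalize t))"
    using right_unary_unary[of t] unary_normalize[of t] by simp
  moreover have "w = tree_perm (normalize t) (right_unary t)"
    using flip_right_unary[OF t(1)] t xs unfolding tree_perm_def by simp
  ultimately show ?thesis unfolding tree_class_def by blast
qed

lemma tree_class_disjoint:
  assumes k1: "k1 \<in> normal_trees n" and k2: "k2 \<in> normal_trees n"
    and w: "w \<in> tree_class k1" "w \<in> tree_class k2"
  shows "k1 = k2"
proof -
  obtain S1 S2 where S: "w = tree_perm k1 S1" "w = tree_perm k2 S2"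
    using w unfolding tree_class_def by blast
  then have "inorder (flip S1 k1) = inorder (flip S2 k2)"
    using perm_of_list_inj[of "inorder (flip S1 k1)" "inorder (flip S2 k2)"]
      flip_props(3)[OF k1] flip_props(3)[OF k2] unfolding tree_perm_def by simp
  then have "flip S1 k1 = flip S2 k2"
    using inorder_inj decreasing_flip[OF tree_props(2)[OF k1]] decreasing_flip[OF tree_props(2)[OF k2]]
    by blast
  then show ?thesis
    using normalize_flip[OF tree_props(1)[OF k1], of S1] normalize_flip[OF tree_props(1)[OF k2], of S2]
    by simp
qed

lemma tree_class_231:
  assumes "k \<in> normal_trees n"
  shows "tree_class k \<subseteq> Sn231 n \<or> tree_class k \<inter> Sn231 n = {}"
proof (cases "split_ordered k")
  case True
  then have "tree_class k \<subseteq> Sn231 n"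
    using tree_perm_in_Sn[OF assms] avoids231_tree_perm[OF assms]
    unfolding tree_class_def Sn231_def by blast
  then show ?thesis ..
next
  case False
  then have "tree_class k \<inter> Sn231 n = {}"
    using avoids231_tree_perm[OF assms] unfolding tree_class_def Sn231_def by blast
  then show ?thesis ..
qed

theorem tree_classes_decomposition:
  assumes "1 \<le> n"
  shows "sym_bool_decomp (Sn n) (shard_le n) (des n) (n - 1) (tree_class ` normal_trees n)"
proof -
  have "tree_class k \<subseteq> Sn n" if "k \<in> normal_trees n" for k
    using tree_perm_in_Sn[OF that] unfolding tree_class_def by blast
  then have "\<Union>(tree_class ` normal_trees n) = Sn n" using tree_classes_cover by blast
  moreover have "{} \<notin> tree_class ` normal_trees n" unfolding tree_class_def by blast
  moreover have "\<forall>A\<in>tree_class ` normal_trees n. \<forall>B\<in>tree_class ` normal_trees n. A \<noteq> B \<longrightarrow> A \<inter> B = {}"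
    using tree_class_disjoint by blast
  moreover have "\<forall>A\<in>tree_class ` normal_trees n. \<exists>j (\<rho> :: nat set \<Rightarrow> nat \<Rightarrow> nat). 2 * j \<le> n - 1 \<and>
      bij_betw \<rho> (Pow {..<n - 1 - 2 * j}) A \<and>
      (\<forall>S T. S \<subseteq> T \<and> T \<subseteq> {..<n - 1 - 2 * j} \<and> card T = card S + 1 \<longrightarrow>
         covers (Sn n) (shard_le n) (\<rho> S) (\<rho> T)) \<and>
      (\<forall>S. S \<subseteq> {..<n - 1 - 2 * j} \<longrightarrow> des n (\<rho> S) = j + card S)"
    using tree_class_boolean[OF _ assms] by blast
  ultimately show ?thesis unfolding sym_bool_decomp_def by (intro conjI)
qed

theorem theorem1p2:
  fixes n :: nat
  assumes "n \<ge> 1"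
  shows "\<exists>Q. sym_bool_decomp (Sn n) (shard_le n) (des n) (n - 1) Q \<and>
             (\<forall>A\<in>Q. A \<subseteq> Sn231 n \<or> A \<inter> Sn231 n = {}) \<and>
             sym_bool_decomp (Sn231 n) (shard_le n) (des n) (n - 1) {A\<in>Q. A \<subseteq> Sn231 n}"
proof -
  let ?Q = "tree_class ` normal_trees n"
  have decomp: "sym_bool_decomp (Sn n) (shard_le n) (des n) (n - 1) ?Q"
    using tree_classes_decomposition assms by simp
  have parts: "\<forall>A\<in>?Q. A \<subseteq> Sn231 n \<or> A \<inter> Sn231 n = {}"
    using tree_class_231 by blast
  have "Sn231 n \<subseteq> Sn n" by (auto simp: Sn231_def)
  then have "sym_bool_decomp (Sn231 n) (shard_le n) (des n) (n - 1) {A\<in>?Q. A \<subseteq> Sn231 n}"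
    using sym_bool_decomp_restrict[OF decomp _ parts] by blast
  then show ?thesis using decomp parts by blast
qed

end
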